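(* Let $\mu$ be a non-zero $\sigma$-finite (countably additive, non-negative, complete) measure on a $\sigma$-algebra $\Sigma$ of subsets of a set $\Omega$, and let $X$ be a weakly uniformly rotund (real or complex) Banach space. Then the Lebesgue--Bochner space $L_1(\mu,X)$ has property CWO-S, i.e. for every finite convex combination $C=\sum_{k=1}^m \lambda_k U_k$ (with $\lambda_k>0$, $\sum_k\lambda_k=1$) of relatively weakly open subsets $U_1,\dots,U_m$ of the closed unit ball $B_{L_1(\mu,X)}$, every element $x\in C$ with $\|x\|=1$ is an interior point of $C$ in the relative weak topology of $B_{L_1(\mu,X)}$.
   Context: A Banach space $X$ is weakly uniformly rotund (wUR) if for every $x^\ast\in X^\ast$ and every $\varepsilon>0$ there is $\delta>0$ such that whenever $x,y\in X$ with $\|x\|=\|y\|=1$ and $\|\tfrac12(x+y)\|>1-\delta$, one has $|x^\ast(x-y)|<\varepsilon$. For a Banach space $Z$, $B_Z$ denotes its closed unit ball and $S_Z$ its unit sphere. $Z$ has property CWO-S if for every convex combination $C$ of finitely many relatively weakly open subsets of $B_Z$, every $x\in C\cap S_Z$ is an interior point of $C$ in the relative weak topology of $B_Z$. *)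

theory Defs
  imports "HOL-Analysis.Analysis"
begin

definition wUR :: "'b::banach itself \<Rightarrow> bool" where
  "wUR _ \<longleftrightarrow>
     (\<forall>xs::'b \<Rightarrow> real. bounded_linear xs \<longrightarrow>
        (\<forall>\<epsilon>>0. \<exists>\<delta>>0. \<forall>x y::'b. norm x = 1 \<and> norm y = 1 \<and> norm ((1/2) *\<^sub>R (x + y)) > 1 - \<delta>
             \<longrightarrow> \<bar>xs (x - y)\<bar> < \<epsilon>))"

definition strongly_measurable :: "'a measure \<Rightarrow> ('a \<Rightarrow> 'b::real_normed_vector) \<Rightarrow> bool" where
  "strongly_measurable M f \<longleftrightarrow>
     (\<exists>s::nat \<Rightarrow> 'a \<Rightarrow> 'b. (\<forall>n. simple_function M (s n)) \<and>
        (AE x in M. (\<lambda>n. s n x) \<longlonglongrightarrow> f x))"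

text \<open>The Lebesgue--Bochner space L1(M,X), represented by functions (elements equal
  a.e. are not identified; the seminorm below does not distinguish them).\<close>
definition L1 :: "'a measure \<Rightarrow> ('a \<Rightarrow> 'b::real_normed_vector) set" where
  "L1 M = {f. strongly_measurable M f \<and> (\<integral>\<^sup>+x. ennreal (norm (f x)) \<partial>M) < \<infinity>}"

definition L1norm :: "'a measure \<Rightarrow> ('a \<Rightarrow> 'b::real_normed_vector) \<Rightarrow> real" where
  "L1norm M f = enn2real (\<integral>\<^sup>+x. ennreal (norm (f x)) \<partial>M)"

definition L1_ball :: "'a measure \<Rightarrow> ('a \<Rightarrow> 'b::real_normed_vector) set" where
  "L1_ball M = {f \<in> L1 M. L1norm M f \<le> 1}"

definition L1_dual :: "'a measure \<Rightarrow> (('a \<Rightarrow> 'b::real_normed_vector) \<Rightarrow> real) set" where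
  "L1_dual M = {\<phi>.
     (\<forall>f\<in>L1 M. \<forall>g\<in>L1 M. \<phi> (\<lambda>x. f x + g x) = \<phi> f + \<phi> g) \<and>
     (\<forall>c. \<forall>f\<in>L1 M. \<phi> (\<lambda>x. c *\<^sub>R f x) = c * \<phi> f) \<and>
     (\<exists>K. \<forall>f\<in>L1 M. \<bar>\<phi> f\<bar> \<le> K * L1norm M f)}"

definition rel_weakly_open :: "'a measure \<Rightarrow> ('a \<Rightarrow> 'b::real_normed_vector) set \<Rightarrow> bool" where
  "rel_weakly_open M U \<longleftrightarrow> U \<subseteq> L1_ball M \<and>
     (\<forall>f\<in>U. \<exists>F \<epsilon>. finite F \<and> F \<subseteq> L1_dual M \<and> \<epsilon> > 0 \<and>
        {g \<in> L1_ball M. \<forall>\<phi>\<in>F. \<bar>\<phi> g - \<phi> f\<bar> < \<epsilon>} \<subseteq> U)"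

definition L1_CWO_S :: "'a measure \<Rightarrow> 'b::real_normed_vector itself \<Rightarrow> bool" where
  "L1_CWO_S M _ \<longleftrightarrow>
     (\<forall>(m::nat) (lam::nat \<Rightarrow> real) (U::nat \<Rightarrow> ('a \<Rightarrow> 'b) set).
        m \<ge> 1 \<and> (\<forall>k<m. lam k > 0) \<and> (\<Sum>k<m. lam k) = 1 \<and>
        (\<forall>k<m. rel_weakly_open M (U k)) \<longrightarrow>
        (let C = {(\<lambda>x. \<Sum>k<m. lam k *\<^sub>R u k x) | u. \<forall>k<m. u k \<in> U k} in
          \<forall>x\<in>C. L1norm M x = 1 \<longrightarrow>
            (\<exists>V. rel_weakly_open M V \<and> x \<in> V \<and> V \<subseteq> C)))"

end

theory Submission
  imports Defs
begin

text \<open>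
  If \<open>x = (\<Sum>k<m. c k *\<^sub>R u k)\<close> has norm one with every \<open>u k\<close> in the unit ball, then
  \<open>norm (x \<omega>) = (\<Sum>k<m. c k * norm (u k \<omega>))\<close> almost everywhere, so by strict convexity of \<open>X\<close>
  (a consequence of wUR) each \<open>u k\<close> is a scalar multiple \<open>h k *\<^sub>R x\<close> of \<open>x\<close> with
  \<open>(\<Sum>k<m. c k * h k) = 1\<close>. A point \<open>y\<close> of the ball that is weakly close to \<open>x\<close> is split as
  \<open>y = (\<Sum>k<m. c k *\<^sub>R (g k *\<^sub>R y))\<close> with \<open>g k\<close> a perturbation of \<open>h k\<close>. Testing \<open>y\<close> against
  \<open>f \<mapsto> \<integral>h k \<omega> * x\<^sup>*(s \<omega>) (f \<omega>)\<close>, with \<open>s\<close> a simple approximation of \<open>x\<close> and \<open>x\<^sup>*(c)\<close>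
  a norming functional of \<open>c\<close>, shows \<open>\<integral>h k * norm y \<approx> 1 \<ge> \<integral>norm y\<close>, which leaves just
  enough room to rebalance the \<open>h k\<close> into \<open>g k\<close> with \<open>g k *\<^sub>R y\<close> in the ball; testing against
  \<open>\<phi> (h k *\<^sub>R _)\<close> for the functionals \<open>\<phi>\<close> defining \<open>U k\<close> then puts \<open>g k *\<^sub>R y\<close> into \<open>U k\<close>.
\<close>

section \<open>Norming functionals\<close>

definition norming_subgraph :: "'b::real_normed_vector \<Rightarrow> ('b \<times> real) set \<Rightarrow> bool" where
  "norming_subgraph z G \<longleftrightarrow> subspace G \<and> (z, norm z) \<in> G \<and> (\<forall>(x, r)\<in>G. r \<le> norm x)"

lemma norming_subgraph_span: "norming_subgraph z (span {(z, norm z)})"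
proof -
  have "r \<le> norm x" if xr: "(x, r) \<in> span {(z, norm z)}" for x r
  proof -
    obtain c where "x = c *\<^sub>R z" "r = c * norm z"
      using xr unfolding span_singleton by auto
    then show ?thesis
      by (simp add: mult_right_mono)
  qed
  then show ?thesis
    unfolding norming_subgraph_def by (auto intro: span_base)
qed

lemma norming_subgraph_Union_chain:
  assumes C: "subset.chain {G. norming_subgraph z G} C" and "C \<noteq> {}"
  shows "norming_subgraph z (\<Union>C)"
proof -
  have sub: "subspace G" "(z, norm z) \<in> G" "\<forall>(x, r)\<in>G. r \<le> norm x" if "G \<in> C" for G
    using C that unfolding subset.chain_def norming_subgraph_def by blast+
  have common: "\<exists>G\<in>C. p \<in> G \<and> q \<in> G" if "p \<in> \<Union>C" "q \<in> \<Union>C" for p q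
    using C that unfolding subset.chain_def by blast
  have "subspace (\<Union>C)"
    unfolding subspace_def
  proof (intro conjI ballI allI)
    show "0 \<in> \<Union>C"
      using \<open>C \<noteq> {}\<close> sub(1) subspace_0 by blast
    show "p + q \<in> \<Union>C" if "p \<in> \<Union>C" "q \<in> \<Union>C" for p q
      using common[OF that] sub(1) subspace_add by blast
    show "c *\<^sub>R p \<in> \<Union>C" if "p \<in> \<Union>C" for c p
      using that sub(1) subspace_scale by blast
  qed
  then show ?thesis
    unfolding norming_subgraph_def using \<open>C \<noteq> {}\<close> sub(2,3) by blast
qed

lemma norming_subgraph_unique:
  assumes G: "norming_subgraph z G" and "(x, r) \<in> G" "(x, r') \<in> G"
  shows "r = r'"
proof -
  have "(0, r - r') \<in> G" "(0, r' - r) \<in> G"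
    using assms subspace_diff[of G] unfolding norming_subgraph_def by fastforce+
  moreover have "\<And>s. (0, s) \<in> G \<Longrightarrow> s \<le> 0"
    using G unfolding norming_subgraph_def by fastforce
  ultimately have "r - r' \<le> 0" "r' - r \<le> 0"
    by blast+
  then show ?thesis
    by simp
qed

lemma norming_subgraph_extension_value:
  assumes G: "norming_subgraph z G"
  obtains c where "\<And>x r. (x, r) \<in> G \<Longrightarrow> r - norm (x - v) \<le> c"
    and "\<And>y s. (y, s) \<in> G \<Longrightarrow> c \<le> norm (y + v) - s"
proof -
  have "subspace G" and dom: "\<And>x r. (x, r) \<in> G \<Longrightarrow> r \<le> norm x" and z: "(z, norm z) \<in> G"
    using G unfolding norming_subgraph_def by auto
  have sep: "r - norm (x - v) \<le> norm (y + v) - s" if "(x, r) \<in> G" "(y, s) \<in> G" for x r y s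
  proof -
    have "r + s \<le> norm (x + y)"
      using dom subspace_add[OF \<open>subspace G\<close> that] by simp
    also have "\<dots> \<le> norm (x - v) + norm (y + v)"
      using norm_triangle_ineq[of "x - v" "y + v"] by simp
    finally show ?thesis by simp
  qed
  define c where "c = (SUP (x, r)\<in>G. r - norm (x - v))"
  have "bdd_above ((\<lambda>(x, r). r - norm (x - v)) ` G)"
    using sep[OF _ z] by (intro bdd_aboveI2[where M="norm (z + v) - norm z"]) auto
  then have "r - norm (x - v) \<le> c" if "(x, r) \<in> G" for x r
    unfolding c_def using cSUP_upper[OF that] by fastforce
  moreover have "c \<le> norm (y + v) - s" if "(y, s) \<in> G" for y s
    unfolding c_def using z sep[OF _ that] by (intro cSUP_least) auto
  ultimately show ?thesis
    using that by blast
qed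

lemma norming_subgraph_extension_dominated:
  assumes G: "norming_subgraph z G"
    and lower: "\<And>x r. (x, r) \<in> G \<Longrightarrow> r - norm (x - v) \<le> c"
    and upper: "\<And>y s. (y, s) \<in> G \<Longrightarrow> c \<le> norm (y + v) - s"
    and xr: "(x, r) \<in> G"
  shows "r + t * c \<le> norm (x + t *\<^sub>R v)"
proof (cases t "0::real" rule: linorder_cases)
  case less
  have "(1 / - t) *\<^sub>R (x, r) \<in> G"
    using G xr subspace_scale unfolding norming_subgraph_def by blast
  then have "r / - t - norm ((1 / - t) *\<^sub>R x - v) \<le> c"
    using lower by simp
  then have "r - (- t) * norm ((1 / - t) *\<^sub>R x - v) \<le> - t * c"
    using less by (simp add: field_simps)
  moreover have "x + t *\<^sub>R v = (- t) *\<^sub>R ((1 / - t) *\<^sub>R x - v)"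
    using less by (simp add: scaleR_diff_right)
  then have "norm (x + t *\<^sub>R v) = (- t) * norm ((1 / - t) *\<^sub>R x - v)"
    using less by simp
  ultimately show ?thesis
    by simp
next
  case equal
  then show ?thesis
    using G xr unfolding norming_subgraph_def by auto
next
  case greater
  have "(1 / t) *\<^sub>R (x, r) \<in> G"
    using G xr subspace_scale unfolding norming_subgraph_def by blast
  then have "c \<le> norm ((1 / t) *\<^sub>R x + v) - r / t"
    using upper by simp
  then have "t * c \<le> t * norm ((1 / t) *\<^sub>R x + v) - r"
    using greater by (simp add: field_simps)
  moreover have "x + t *\<^sub>R v = t *\<^sub>R ((1 / t) *\<^sub>R x + v)"
    using greater by (simp add: scaleR_add_right)
  then have "norm (x + t *\<^sub>R v) = t * norm ((1 / t) *\<^sub>R x + v)"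
    using greater by simp
  ultimately show ?thesis
    by simp
qed

lemma norming_subgraph_extend:
  assumes G: "norming_subgraph z G" and v: "v \<notin> fst ` G"
  obtains G' where "norming_subgraph z G'" "G \<subset> G'"
proof -
  obtain c where lower: "\<And>x r. (x, r) \<in> G \<Longrightarrow> r - norm (x - v) \<le> c"
    and upper: "\<And>y s. (y, s) \<in> G \<Longrightarrow> c \<le> norm (y + v) - s"
    using norming_subgraph_extension_value[OF G] by metis
  note extends = norming_subgraph_extension_dominated[OF G lower upper]
  have "subspace G" and z: "(z, norm z) \<in> G"
    using G unfolding norming_subgraph_def by auto
  define G' where "G' = {p + q | p q. p \<in> G \<and> q \<in> span {(v, c)}}"
  have "G \<subseteq> G'"
  proof
    fix p assume "p \<in> G"
    then show "p \<in> G'"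
      unfolding G'_def using span_zero[of "{(v, c)}"] by (intro CollectI exI[of _ p] exI[of _ 0]) simp
  qed
  have "(v, c) \<in> G'"
    unfolding G'_def using subspace_0[OF \<open>subspace G\<close>] span_base[of "(v, c)" "{(v, c)}"]
    by (intro CollectI exI[of _ 0] exI[of _ "(v, c)"]) simp
  moreover have "(v, c) \<notin> G"
    using v by (metis fst_conv image_eqI)
  moreover have "norming_subgraph z G'"
    unfolding norming_subgraph_def
  proof (intro conjI ballI)
    show "subspace G'"
      unfolding G'_def using \<open>subspace G\<close> by (intro subspace_sums) auto
    show "(z, norm z) \<in> G'"
      using z \<open>G \<subseteq> G'\<close> by blast
    fix q assume "q \<in> G'"
    then obtain x r t where "(x, r) \<in> G" "q = (x, r) + t *\<^sub>R (v, c)"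
      unfolding G'_def span_singleton by auto
    then show "case q of (y, s) \<Rightarrow> s \<le> norm y"
      using extends by simp
  qed
  ultimately show ?thesis
    using that \<open>G \<subseteq> G'\<close> by blast
qed

lemma Hahn_Banach_norming_functional:
  fixes z :: "'b::real_normed_vector"
  shows "\<exists>f. bounded_linear f \<and> (\<forall>w. \<bar>f w\<bar> \<le> norm w) \<and> f z = norm z"
proof -
  have "\<exists>G\<in>{G. norming_subgraph z G}. \<forall>G'\<in>{G. norming_subgraph z G}. G \<subseteq> G' \<longrightarrow> G' = G"
    using norming_subgraph_span norming_subgraph_Union_chain
    by (intro subset_Zorn_nonempty) auto
  then obtain G where G: "norming_subgraph z G"
    and maximal: "\<And>G'. norming_subgraph z G' \<Longrightarrow> G \<subseteq> G' \<Longrightarrow> G' = G"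
    by blast
  have total: "\<exists>r. (x, r) \<in> G" for x
  proof (rule ccontr)
    assume "\<nexists>r. (x, r) \<in> G"
    then have "x \<notin> fst ` G"
      by force
    then show False
      using norming_subgraph_extend[OF G] maximal by blast
  qed
  define f where "f x = (THE r. (x, r) \<in> G)" for x
  have f_eq: "f x = r" if "(x, r) \<in> G" for x r
    unfolding f_def using that norming_subgraph_unique[OF G] by blast
  have graph: "(x, f x) \<in> G" for x
    using total f_eq by blast
  have "subspace G"
    using G unfolding norming_subgraph_def by simp
  have add: "f (x + y) = f x + f y" for x y
    using f_eq subspace_add[OF \<open>subspace G\<close> graph graph] by simp
  have scale: "f (c *\<^sub>R x) = c * f x" for c x
    using f_eq subspace_scale[OF \<open>subspace G\<close> graph] by simp
  have dom: "f w \<le> norm w" for w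
    using G graph[of w] unfolding norming_subgraph_def by auto
  have bound: "\<bar>f w\<bar> \<le> norm w" for w
    using dom[of w] dom[of "- w"] scale[of "-1" w] by simp
  have "bounded_linear f"
    using add scale bound by (intro bounded_linear_intro[where K=1]) auto
  then show ?thesis
    using bound f_eq G unfolding norming_subgraph_def by blast
qed

section \<open>Rotundity\<close>

definition rotund :: "'b::real_normed_vector itself \<Rightarrow> bool" where
  "rotund _ \<longleftrightarrow> (\<forall>x y::'b. norm x = 1 \<longrightarrow> norm y = 1 \<longrightarrow> norm (x + y) = 2 \<longrightarrow> x = y)"

lemma wUR_imp_rotund:
  assumes wUR: "wUR TYPE('b::banach)"
  shows "rotund TYPE('b)"
  unfolding rotund_def
proof (intro allI impI)
  fix x y :: 'b
  assume x: "norm x = 1" and y: "norm y = 1" and xy: "norm (x + y) = 2"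
  obtain g where g: "bounded_linear g" "g (x - y) = norm (x - y)"
    using Hahn_Banach_norming_functional[of "x - y"] by blast
  have "norm (x - y) < \<epsilon>" if eps: "\<epsilon> > 0" for \<epsilon>
  proof -
    obtain \<delta> where "\<delta> > 0" and \<delta>: "\<forall>x y::'b. norm x = 1 \<and> norm y = 1 \<and>
        norm ((1/2) *\<^sub>R (x + y)) > 1 - \<delta> \<longrightarrow> \<bar>g (x - y)\<bar> < \<epsilon>"
      using wUR[unfolded wUR_def, rule_format, OF g(1) eps] by blast
    have "norm ((1/2) *\<^sub>R (x + y)) = 1"
      using xy by simp
    then have "\<bar>g (x - y)\<bar> < \<epsilon>"
      using \<delta> \<open>\<delta> > 0\<close> x y by simp
    then show ?thesis
      using g(2) by simp
  qed
  from this[of "norm (x - y)"] show "x = y"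
    by auto
qed

lemma rotund_norm_sum_eq_imp_proportional:
  fixes w :: "nat \<Rightarrow> 'b::real_normed_vector"
  assumes rotund: "rotund TYPE('b)" and pos: "\<And>j. j < m \<Longrightarrow> c j > 0"
    and eq: "norm (\<Sum>j<m. c j *\<^sub>R w j) = (\<Sum>j<m. c j * norm (w j))" and k: "k < m"
  shows "w k = (norm (w k) / (\<Sum>j<m. c j * norm (w j))) *\<^sub>R (\<Sum>j<m. c j *\<^sub>R w j)"
proof (cases "w k = 0")
  case False
  define W where "W = (\<Sum>j<m. c j *\<^sub>R w j)"
  define S where "S = (\<Sum>j<m. c j * norm (w j))"
  obtain f where f: "bounded_linear f" "\<And>v. \<bar>f v\<bar> \<le> norm v" "f W = norm W"
    using Hahn_Banach_norming_functional[of W] by blast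
  interpret f: bounded_linear f by (fact f(1))
  have "(\<Sum>j<m. c j * (norm (w j) - f (w j))) = S - f W"
    unfolding S_def W_def f.sum f.scale by (simp add: right_diff_distrib sum_subtractf)
  also have "\<dots> = 0"
    using f(3) eq unfolding S_def W_def by simp
  finally have "(\<Sum>j<m. c j * (norm (w j) - f (w j))) = 0" .
  moreover have "0 \<le> c j * (norm (w j) - f (w j))" if "j < m" for j
    using pos[OF that] f(2)[of "w j"] by simp
  ultimately have "\<forall>j\<in>{..<m}. c j * (norm (w j) - f (w j)) = 0"
    by (subst (asm) sum_nonneg_eq_0_iff) auto
  then have "c k * (norm (w k) - f (w k)) = 0"
    using k by blast
  then have fk: "f (w k) = norm (w k)"
    using pos[OF k] by simp
  have "S \<ge> c k * norm (w k)"
    unfolding S_def using k pos by (intro member_le_sum) (auto intro: mult_nonneg_nonneg simp: less_imp_le)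
  then have S: "S > 0"
    using False pos[OF k] by (smt (verit) mult_pos_pos zero_less_norm_iff)
  define a b where "a = (1 / norm (w k)) *\<^sub>R w k" and "b = (1 / S) *\<^sub>R W"
  have "norm a = 1" "norm b = 1" "f a = 1" "f b = 1"
    using False S fk f(3) eq unfolding a_def b_def S_def W_def f.scale by auto
  moreover have "norm (a + b) = 2"
    using f(2)[of "a + b"] norm_triangle_ineq[of a b] \<open>norm a = 1\<close> \<open>norm b = 1\<close>
      \<open>f a = 1\<close> \<open>f b = 1\<close> f.add[of a b] by linarith
  ultimately have "a = b"
    using rotund unfolding rotund_def by blast
  have "w k = norm (w k) *\<^sub>R a"
    using False unfolding a_def by simp
  then show ?thesis
    unfolding \<open>a = b\<close> b_def W_def S_def by simp
qed simp

section \<open>Strong measurability and \<open>L\<^sub>1\<close>\<close>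

lemma strongly_measurable_simple_function:
  "simple_function M f \<Longrightarrow> strongly_measurable M f"
  unfolding strongly_measurable_def by (intro exI[of _ "\<lambda>n. f"]) auto

lemma strongly_measurable_simple_compose:
  fixes s :: "'a \<Rightarrow> 'c" and F :: "'c \<Rightarrow> 'b::real_normed_vector \<Rightarrow> 'd::real_normed_vector"
  assumes s: "simple_function M s" and f: "strongly_measurable M f" and F: "\<And>c. continuous_on UNIV (F c)"
  shows "strongly_measurable M (\<lambda>x. F (s x) (f x))"
proof -
  obtain t where t: "\<And>n. simple_function M (t n)" "AE x in M. (\<lambda>n. t n x) \<longlonglongrightarrow> f x"
    using f unfolding strongly_measurable_def by blast
  have "AE x in M. (\<lambda>n. F (s x) (t n x)) \<longlonglongrightarrow> F (s x) (f x)"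
    using t(2) by eventually_elim (rule continuous_on_tendsto_compose[OF F], auto)
  moreover have "simple_function M (\<lambda>x. F (s x) (t n x))" for n
    by (rule simple_function_compose2[OF s t(1)])
  ultimately show ?thesis
    unfolding strongly_measurable_def by (intro exI[of _ "\<lambda>n x. F (s x) (t n x)"]) auto
qed

lemma strongly_measurable_compose:
  "strongly_measurable M f \<Longrightarrow> continuous_on UNIV h \<Longrightarrow> strongly_measurable M (\<lambda>x. h (f x))"
  using strongly_measurable_simple_compose[of M "\<lambda>_. ()" f "\<lambda>_. h"] by simp

lemma strongly_measurable_compose2:
  fixes h :: "'b::real_normed_vector \<Rightarrow> 'c::real_normed_vector \<Rightarrow> 'd::real_normed_vector"
  assumes f: "strongly_measurable M f" and g: "strongly_measurable M g"
    and h: "continuous_on UNIV (\<lambda>p. h (fst p) (snd p))"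
  shows "strongly_measurable M (\<lambda>x. h (f x) (g x))"
proof -
  obtain s where s: "\<And>n. simple_function M (s n)" "AE x in M. (\<lambda>n. s n x) \<longlonglongrightarrow> f x"
    using f unfolding strongly_measurable_def by blast
  obtain t where t: "\<And>n. simple_function M (t n)" "AE x in M. (\<lambda>n. t n x) \<longlonglongrightarrow> g x"
    using g unfolding strongly_measurable_def by blast
  have "AE x in M. (\<lambda>n. h (s n x) (t n x)) \<longlonglongrightarrow> h (f x) (g x)"
    using s(2) t(2)
  proof eventually_elim
    case (elim x)
    then have "(\<lambda>n. (s n x, t n x)) \<longlonglongrightarrow> (f x, g x)"
      by (rule tendsto_Pair)
    from continuous_on_tendsto_compose[OF h this] show ?case
      by simp
  qed
  moreover have "simple_function M (\<lambda>x. h (s n x) (t n x))" for n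
    by (rule simple_function_compose2[OF s(1) t(1)])
  ultimately show ?thesis
    unfolding strongly_measurable_def by (intro exI[of _ "\<lambda>n x. h (s n x) (t n x)"]) auto
qed

lemma strongly_measurable_add:
  "strongly_measurable M f \<Longrightarrow> strongly_measurable M g \<Longrightarrow> strongly_measurable M (\<lambda>x. f x + g x)"
  by (rule strongly_measurable_compose2[where h="(+)"]) (auto intro!: continuous_intros)

lemma strongly_measurable_diff:
  "strongly_measurable M f \<Longrightarrow> strongly_measurable M g \<Longrightarrow> strongly_measurable M (\<lambda>x. f x - g x)"
  by (rule strongly_measurable_compose2[where h="(-)"]) (auto intro!: continuous_intros)

lemma strongly_measurable_scaleR:
  "strongly_measurable M (f :: 'a \<Rightarrow> real) \<Longrightarrow> strongly_measurable M g \<Longrightarrow>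
    strongly_measurable M (\<lambda>x. f x *\<^sub>R g x)"
  by (rule strongly_measurable_compose2[where h="(*\<^sub>R)"]) (auto intro!: continuous_intros)

lemma strongly_measurable_norm:
  "strongly_measurable M f \<Longrightarrow> strongly_measurable M (\<lambda>x. norm (f x))"
  by (rule strongly_measurable_compose) (auto intro!: continuous_intros)

lemma borel_measurable_AE_eq_complete:
  fixes g :: "'a \<Rightarrow> 'c::topological_space"
  assumes "complete_measure M" and g': "g' \<in> borel_measurable M" and ae: "AE x in M. g x = g' x"
  shows "g \<in> borel_measurable M"
proof (rule measurableI)
  fix A :: "'c set"
  assume "A \<in> sets borel"
  then have "g' -` A \<inter> space M \<in> sets M"
    by (rule measurable_sets[OF g'])
  moreover have "AE x in M. x \<in> g' -` A \<inter> space M \<longleftrightarrow> x \<in> g -` A \<inter> space M"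
    using ae by eventually_elim auto
  ultimately show "g -` A \<inter> space M \<in> sets M"
    using complete_measure.in_sets_AE[OF \<open>complete_measure M\<close>] by blast
qed auto

lemma borel_measurable_strongly_measurable:
  fixes g :: "'a \<Rightarrow> 'c::real_normed_vector"
  assumes "complete_measure M" and g: "strongly_measurable M g"
  shows "g \<in> borel_measurable M"
proof -
  obtain s where s: "\<And>n. simple_function M (s n)" "AE x in M. (\<lambda>n. s n x) \<longlonglongrightarrow> g x"
    using g unfolding strongly_measurable_def by blast
  obtain N where N: "{x \<in> space M. \<not> (\<lambda>n. s n x) \<longlonglongrightarrow> g x} \<subseteq> N" "N \<in> null_sets M"
    using s(2) by (auto elim!: AE_E simp: null_sets_def)
  define g' where "g' x = (if x \<in> N then 0 else g x)" for x
  have "(\<lambda>x. if x \<in> N then 0 else s n x) \<in> borel_measurable M" for n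
    using N(2) borel_measurable_simple_function[OF s(1)] by (intro measurable_If_set) auto
  moreover have "(\<lambda>n. if x \<in> N then 0 else s n x) \<longlonglongrightarrow> g' x" if "x \<in> space M" for x
    using N(1) that unfolding g'_def by (cases "x \<in> N") auto
  ultimately have "g' \<in> borel_measurable M"
    by (rule borel_measurable_LIMSEQ_metric)
  moreover have "AE x in M. g x = g' x"
    using AE_not_in[OF N(2)] by eventually_elim (simp add: g'_def)
  ultimately show ?thesis
    by (rule borel_measurable_AE_eq_complete[OF \<open>complete_measure M\<close>])
qed

lemma strongly_measurable_borel:
  fixes g :: "'a \<Rightarrow> 'c::{real_normed_vector, second_countable_topology}"
  assumes "g \<in> borel_measurable M"
  shows "strongly_measurable M g"
proof -
  obtain F where "\<forall>i. simple_function M (F i)" "\<forall>x\<in>space M. (\<lambda>i. F i x) \<longlonglongrightarrow> g x"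
    using borel_measurable_implies_sequence_metric[OF assms, of 0] by blast
  then show ?thesis
    unfolding strongly_measurable_def by (intro exI[of _ F]) auto
qed

lemma integrable_bounded_mult:
  fixes f g :: "'a \<Rightarrow> real"
  assumes f: "integrable M f" and g: "g \<in> borel_measurable M"
    and bound: "\<And>x. x \<in> space M \<Longrightarrow> \<bar>g x\<bar> \<le> C"
  shows "integrable M (\<lambda>x. g x * f x)"
proof (rule Bochner_Integration.integrable_bound[where f="\<lambda>x. C * f x"])
  show "integrable M (\<lambda>x. C * f x)"
    using f by simp
  show "(\<lambda>x. g x * f x) \<in> borel_measurable M"
    using g borel_measurable_integrable[OF f] by measurable
  show "AE x in M. norm (g x * f x) \<le> norm (C * f x)"
  proof (rule AE_I2)
    fix x
    assume "x \<in> space M"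
    then have "\<bar>g x\<bar> \<le> \<bar>C\<bar>"
      using bound by force
    then show "norm (g x * f x) \<le> norm (C * f x)"
      by (simp add: abs_mult mult_right_mono)
  qed
qed

lemma L1I:
  assumes "complete_measure M" and f: "strongly_measurable M f" and w: "integrable M w"
    and le: "\<And>x. x \<in> space M \<Longrightarrow> norm (f x) \<le> w x"
  shows "f \<in> L1 M"
proof -
  have "integrable M (\<lambda>x. norm (f x))"
  proof (rule Bochner_Integration.integrable_bound[OF w])
    show "(\<lambda>x. norm (f x)) \<in> borel_measurable M"
      using assms(1) f by (intro borel_measurable_strongly_measurable strongly_measurable_norm)
    show "AE x in M. norm (norm (f x)) \<le> norm (w x)"
      using le by (intro AE_I2) force
  qed
  then show ?thesis
    unfolding L1_def integrable_iff_bounded using f by simp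
qed

lemma L1D:
  assumes "complete_measure M" and f: "f \<in> L1 M"
  shows "strongly_measurable M f" and "integrable M (\<lambda>x. norm (f x))"
    and "L1norm M f = (\<integral>x. norm (f x) \<partial>M)"
proof -
  show sm: "strongly_measurable M f"
    using f unfolding L1_def by simp
  have "(\<lambda>x. norm (f x)) \<in> borel_measurable M"
    using assms(1) sm by (intro borel_measurable_strongly_measurable strongly_measurable_norm)
  then show int: "integrable M (\<lambda>x. norm (f x))"
    using f unfolding L1_def integrable_iff_bounded by simp
  have "(\<integral>\<^sup>+x. ennreal (norm (f x)) \<partial>M) = ennreal (\<integral>x. norm (f x) \<partial>M)"
    using int by (intro nn_integral_eq_integral) auto
  then show "L1norm M f = (\<integral>x. norm (f x) \<partial>M)"
    unfolding L1norm_def by simp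
qed

lemma L1norm_nonneg: "0 \<le> L1norm M f"
  by (simp add: L1norm_def)

lemma L1_add:
  assumes "complete_measure M" and "f \<in> L1 M" and "g \<in> L1 M"
  shows "(\<lambda>x. f x + g x) \<in> L1 M"
  using assms L1D[OF assms(1)]
  by (intro L1I[where w="\<lambda>x. norm (f x) + norm (g x)"] strongly_measurable_add
        Bochner_Integration.integrable_add norm_triangle_ineq) auto

lemma L1_diff:
  assumes "complete_measure M" and "f \<in> L1 M" and "g \<in> L1 M"
  shows "(\<lambda>x. f x - g x) \<in> L1 M"
  using assms L1D[OF assms(1)]
  by (intro L1I[where w="\<lambda>x. norm (f x) + norm (g x)"] strongly_measurable_diff
        Bochner_Integration.integrable_add norm_triangle_ineq4) auto

lemma L1_scaleR:
  assumes "complete_measure M" and f: "f \<in> L1 M" and h: "h \<in> borel_measurable M"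
    and bound: "\<And>x. x \<in> space M \<Longrightarrow> \<bar>h x\<bar> \<le> H"
  shows "(\<lambda>x. h x *\<^sub>R f x) \<in> L1 M"
proof (rule L1I[where w="\<lambda>x. H * norm (f x)"])
  show "strongly_measurable M (\<lambda>x. h x *\<^sub>R f x)"
    using assms(1) f h by (intro strongly_measurable_scaleR strongly_measurable_borel L1D)
  show "integrable M (\<lambda>x. H * norm (f x))"
    using L1D(2)[OF assms(1) f] by simp
  show "norm (h x *\<^sub>R f x) \<le> H * norm (f x)" if "x \<in> space M" for x
    using bound[OF that] by (simp add: mult_right_mono)
qed fact

lemma L1_sum:
  assumes "complete_measure M" and "\<And>k. k < (m::nat) \<Longrightarrow> f k \<in> L1 M"
  shows "(\<lambda>x. \<Sum>k<m. f k x) \<in> L1 M"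
  using assms(2)
proof (induction m)
  case 0
  have "(\<lambda>x. 0) \<in> L1 M"
    using assms(1) by (intro L1I[where w="\<lambda>x. 0"] strongly_measurable_simple_function) auto
  then show ?case
    by simp
next
  case (Suc m)
  then show ?case
    using L1_add[OF assms(1), of "\<lambda>x. \<Sum>k<m. f k x" "f m"] by simp
qed

lemma L1norm_scaleR:
  assumes "complete_measure M" and "f \<in> L1 M" and "h \<in> borel_measurable M"
    and "\<And>x. x \<in> space M \<Longrightarrow> \<bar>h x\<bar> \<le> H"
  shows "L1norm M (\<lambda>x. h x *\<^sub>R f x) = (\<integral>x. \<bar>h x\<bar> * norm (f x) \<partial>M)"
  using L1D(3)[OF assms(1) L1_scaleR[OF assms]] by simp

lemma L1norm_scaleR_le:
  assumes "complete_measure M" and f: "f \<in> L1 M" and h: "h \<in> borel_measurable M"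
    and bound: "\<And>x. x \<in> space M \<Longrightarrow> \<bar>h x\<bar> \<le> H"
  shows "L1norm M (\<lambda>x. h x *\<^sub>R f x) \<le> H * L1norm M f"
proof -
  have "(\<integral>x. \<bar>h x\<bar> * norm (f x) \<partial>M) \<le> (\<integral>x. H * norm (f x) \<partial>M)"
  proof (rule integral_mono)
    show "integrable M (\<lambda>x. \<bar>h x\<bar> * norm (f x))"
      using L1D(2)[OF assms(1) f] h bound by (intro integrable_bounded_mult) auto
    show "integrable M (\<lambda>x. H * norm (f x))"
      using L1D(2)[OF assms(1) f] by simp
    show "\<bar>h x\<bar> * norm (f x) \<le> H * norm (f x)" if "x \<in> space M" for x
      using bound[OF that] by (simp add: mult_right_mono)
  qed
  then show ?thesis
    using L1norm_scaleR[OF assms] L1D(3)[OF assms(1) f] by simp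
qed

lemma L1_convex_combination:
  fixes m :: nat
  assumes "complete_measure M" and "\<And>j. j < m \<Longrightarrow> u j \<in> L1 M"
  shows "(\<lambda>\<omega>. \<Sum>j<m. c j *\<^sub>R u j \<omega>) \<in> L1 M"
proof -
  have "(\<lambda>\<omega>. c j *\<^sub>R u j \<omega>) \<in> L1 M" if "j < m" for j
    using L1_scaleR[OF assms(1) assms(2)[OF that] borel_measurable_const, of "c j" "\<bar>c j\<bar>"] by simp
  then show ?thesis
    using L1_sum[OF assms(1), where f="\<lambda>j \<omega>. c j *\<^sub>R u j \<omega>"] by simp
qed

section \<open>The dual of \<open>L\<^sub>1\<close>\<close>

lemma L1_dualD:
  assumes "\<phi> \<in> L1_dual M"
  shows "\<And>f g. f \<in> L1 M \<Longrightarrow> g \<in> L1 M \<Longrightarrow> \<phi> (\<lambda>x. f x + g x) = \<phi> f + \<phi> g"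
    and "\<And>c f. f \<in> L1 M \<Longrightarrow> \<phi> (\<lambda>x. c *\<^sub>R f x) = c * \<phi> f"
    and "\<exists>K\<ge>0. \<forall>f\<in>L1 M. \<bar>\<phi> f\<bar> \<le> K * L1norm M f"
proof -
  show "\<And>f g. f \<in> L1 M \<Longrightarrow> g \<in> L1 M \<Longrightarrow> \<phi> (\<lambda>x. f x + g x) = \<phi> f + \<phi> g"
    and "\<And>c f. f \<in> L1 M \<Longrightarrow> \<phi> (\<lambda>x. c *\<^sub>R f x) = c * \<phi> f"
    using assms unfolding L1_dual_def by blast+
  obtain K where K: "\<forall>f\<in>L1 M. \<bar>\<phi> f\<bar> \<le> K * L1norm M f"
    using assms unfolding L1_dual_def by blast
  have "\<bar>\<phi> f\<bar> \<le> max K 0 * L1norm M f" if "f \<in> L1 M" for f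
  proof -
    have "K * L1norm M f \<le> max K 0 * L1norm M f"
      using L1norm_nonneg by (rule mult_right_mono[rotated]) simp
    then show ?thesis
      using K that by fastforce
  qed
  then show "\<exists>K\<ge>0. \<forall>f\<in>L1 M. \<bar>\<phi> f\<bar> \<le> K * L1norm M f"
    by (intro exI[of _ "max K 0"]) auto
qed

lemma L1_dual_diff:
  assumes "complete_measure M" and "\<phi> \<in> L1_dual M" and "f \<in> L1 M" and "g \<in> L1 M"
  shows "\<phi> (\<lambda>x. f x - g x) = \<phi> f - \<phi> g"
  using L1_dualD(1)[OF assms(2) assms(4) L1_diff[OF assms(1,3,4)]] by simp

lemma L1_dual_AE_cong:
  assumes "complete_measure M" and \<phi>: "\<phi> \<in> L1_dual M" and f: "f \<in> L1 M" and g: "g \<in> L1 M"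
    and ae: "AE x in M. f x = g x"
  shows "\<phi> f = \<phi> g"
proof -
  obtain K where "\<forall>f\<in>L1 M. \<bar>\<phi> f\<bar> \<le> K * L1norm M f"
    using L1_dualD(3)[OF \<phi>] by blast
  moreover have "L1norm M (\<lambda>x. f x - g x) = 0"
    unfolding L1D(3)[OF assms(1) L1_diff[OF assms(1) f g]] using ae
    by (intro integral_eq_zero_AE) auto
  ultimately have "\<phi> (\<lambda>x. f x - g x) = 0"
    using L1_diff[OF assms(1) f g] by fastforce
  then show ?thesis
    using L1_dual_diff[OF assms(1-4)] by simp
qed

lemma L1_dual_scaleR:
  assumes "complete_measure M" and \<phi>: "\<phi> \<in> L1_dual M" and h: "h \<in> borel_measurable M"
    and bound: "\<And>x. x \<in> space M \<Longrightarrow> \<bar>h x\<bar> \<le> H"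
  shows "(\<lambda>f. \<phi> (\<lambda>x. h x *\<^sub>R f x)) \<in> L1_dual M"
proof -
  obtain K where K: "K \<ge> 0" "\<forall>f\<in>L1 M. \<bar>\<phi> f\<bar> \<le> K * L1norm M f"
    using L1_dualD(3)[OF \<phi>] by blast
  note hf = L1_scaleR[OF assms(1) _ h bound]
  have "\<phi> (\<lambda>x. h x *\<^sub>R (f x + g x)) = \<phi> (\<lambda>x. h x *\<^sub>R f x) + \<phi> (\<lambda>x. h x *\<^sub>R g x)"
    if "f \<in> L1 M" "g \<in> L1 M" for f g
    using L1_dualD(1)[OF \<phi> hf[OF that(1)] hf[OF that(2)]] by (simp add: scaleR_add_right)
  moreover have "\<phi> (\<lambda>x. h x *\<^sub>R (c *\<^sub>R f x)) = c * \<phi> (\<lambda>x. h x *\<^sub>R f x)" if "f \<in> L1 M" for c f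
    using L1_dualD(2)[OF \<phi> hf[OF that], of c] by (simp add: mult.commute)
  moreover have "\<bar>\<phi> (\<lambda>x. h x *\<^sub>R f x)\<bar> \<le> (K * H) * L1norm M f" if "f \<in> L1 M" for f
  proof -
    have "\<bar>\<phi> (\<lambda>x. h x *\<^sub>R f x)\<bar> \<le> K * L1norm M (\<lambda>x. h x *\<^sub>R f x)"
      using K(2) hf[OF that] by blast
    also have "\<dots> \<le> K * (H * L1norm M f)"
      using L1norm_scaleR_le[OF assms(1) that h bound] K(1) by (rule mult_left_mono)
    finally show ?thesis
      by (simp add: mult.assoc)
  qed
  ultimately show ?thesis
    unfolding L1_dual_def by blast
qed

lemma L1_dual_finite_bound:
  assumes "finite \<Phi>" and "\<Phi> \<subseteq> L1_dual M"
  shows "\<exists>B>0. \<forall>\<phi>\<in>\<Phi>. \<forall>f\<in>L1 M. \<bar>\<phi> f\<bar> \<le> B * L1norm M f"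
  using assms
proof (induction rule: finite_induct)
  case empty
  show ?case
    by (intro exI[of _ 1]) auto
next
  case (insert \<psi> \<Phi>)
  obtain B where B: "B > 0" "\<forall>\<phi>\<in>\<Phi>. \<forall>f\<in>L1 M. \<bar>\<phi> f\<bar> \<le> B * L1norm M f"
    using insert by blast
  obtain K where K: "K \<ge> 0" "\<forall>f\<in>L1 M. \<bar>\<psi> f\<bar> \<le> K * L1norm M f"
    using L1_dualD(3) insert.prems by blast
  have "C * L1norm M f \<le> (B + K) * L1norm M f" if "C \<le> B + K" for C f
    using that L1norm_nonneg by (rule mult_right_mono)
  then have "\<forall>\<phi>\<in>insert \<psi> \<Phi>. \<forall>f\<in>L1 M. \<bar>\<phi> f\<bar> \<le> (B + K) * L1norm M f"
    using B K by (smt (verit) insert_iff)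
  then show ?case
    using B(1) K(1) by (intro exI[of _ "B + K"]) auto
qed

lemma rel_weakly_open_basic:
  assumes "finite \<Phi>" and "\<Phi> \<subseteq> L1_dual M" and "r > 0"
  shows "rel_weakly_open M {g \<in> L1_ball M. \<forall>\<phi>\<in>\<Phi>. \<bar>\<phi> g - \<phi> x\<bar> < r}"
  unfolding rel_weakly_open_def
proof (intro conjI ballI)
  fix f
  assume f: "f \<in> {g \<in> L1_ball M. \<forall>\<phi>\<in>\<Phi>. \<bar>\<phi> g - \<phi> x\<bar> < r}"
  define d where "d = Min (insert r ((\<lambda>\<phi>. r - \<bar>\<phi> f - \<phi> x\<bar>) ` \<Phi>))"
  have "d > 0"
    unfolding d_def using assms f by (subst Min_gr_iff) auto
  moreover have "d \<le> r - \<bar>\<phi> f - \<phi> x\<bar>" if "\<phi> \<in> \<Phi>" for \<phi>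
    unfolding d_def using assms(1) that by (intro Min_le) auto
  then have "{g \<in> L1_ball M. \<forall>\<phi>\<in>\<Phi>. \<bar>\<phi> g - \<phi> f\<bar> < d} \<subseteq> {g \<in> L1_ball M. \<forall>\<phi>\<in>\<Phi>. \<bar>\<phi> g - \<phi> x\<bar> < r}"
    by fastforce
  ultimately show "\<exists>F \<epsilon>. finite F \<and> F \<subseteq> L1_dual M \<and> \<epsilon> > 0 \<and>
      {g \<in> L1_ball M. \<forall>\<phi>\<in>F. \<bar>\<phi> g - \<phi> f\<bar> < \<epsilon>} \<subseteq> {g \<in> L1_ball M. \<forall>\<phi>\<in>\<Phi>. \<bar>\<phi> g - \<phi> x\<bar> < r}"
    using assms(1,2) by blast
qed auto

lemma L1_dual_scaleR_diff_bound:
  assumes "complete_measure M" and \<phi>: "\<phi> \<in> L1_dual M" and B: "\<forall>f\<in>L1 M. \<bar>\<phi> f\<bar> \<le> B * L1norm M f"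
    and y: "y \<in> L1 M" and g: "g \<in> borel_measurable M" "\<And>x. x \<in> space M \<Longrightarrow> \<bar>g x\<bar> \<le> G"
    and h: "h \<in> borel_measurable M" "\<And>x. x \<in> space M \<Longrightarrow> \<bar>h x\<bar> \<le> H"
  shows "\<bar>\<phi> (\<lambda>x. g x *\<^sub>R y x) - \<phi> (\<lambda>x. h x *\<^sub>R y x)\<bar> \<le> B * (\<integral>x. \<bar>g x - h x\<bar> * norm (y x) \<partial>M)"
proof -
  have d: "\<And>x. x \<in> space M \<Longrightarrow> \<bar>g x - h x\<bar> \<le> G + H"
    using g(2) h(2) by (smt (verit))
  have "\<phi> (\<lambda>x. g x *\<^sub>R y x) - \<phi> (\<lambda>x. h x *\<^sub>R y x) = \<phi> (\<lambda>x. (g x - h x) *\<^sub>R y x)"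
    using L1_dual_diff[OF assms(1) \<phi> L1_scaleR[OF assms(1) y g] L1_scaleR[OF assms(1) y h]]
    by (simp add: scaleR_diff_left)
  also have "\<bar>\<dots>\<bar> \<le> B * L1norm M (\<lambda>x. (g x - h x) *\<^sub>R y x)"
    using B L1_scaleR[OF assms(1) y _ d] g(1) h(1) by fastforce
  also have "L1norm M (\<lambda>x. (g x - h x) *\<^sub>R y x) = (\<integral>x. \<bar>g x - h x\<bar> * norm (y x) \<partial>M)"
    using L1norm_scaleR[OF assms(1) y _ d] g(1) h(1) by simp
  finally show ?thesis .
qed

lemma strongly_measurable_dominated_simple_seq:
  fixes f :: "'a \<Rightarrow> 'b::real_normed_vector"
  assumes "strongly_measurable M f" and nf: "(\<lambda>x. norm (f x)) \<in> borel_measurable M"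
  obtains s where "\<And>n. simple_function M (s n)" and "\<And>n x. norm (s n x) \<le> 2 * norm (f x)"
    and "AE x in M. (\<lambda>n. s n x) \<longlonglongrightarrow> f x"
proof -
  obtain t where t: "\<And>n. simple_function M (t n)" "AE x in M. (\<lambda>n. t n x) \<longlonglongrightarrow> f x"
    using assms(1) unfolding strongly_measurable_def by blast
  define s where "s n x = (if norm (t n x) \<le> 2 * norm (f x) then t n x else 0)" for n x
  have "simple_function M (s n)" for n
  proof (rule simple_function_borel_measurable)
    have "simple_function M (\<lambda>x. norm (t n x))"
      using simple_function_compose[OF t(1), of norm n] by (simp add: comp_def)
    then have "(\<lambda>x. norm (t n x)) \<in> borel_measurable M"
      by (rule borel_measurable_simple_function)
    then have "{x \<in> space M. norm (t n x) \<le> 2 * norm (f x)} \<in> sets M"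
      using nf by measurable
    then show "s n \<in> borel_measurable M"
      unfolding s_def by (rule measurable_If[OF borel_measurable_simple_function[OF t(1)] borel_measurable_const])
    have "s n ` space M \<subseteq> insert 0 (t n ` space M)"
      unfolding s_def by auto
    then show "finite (s n ` space M)"
      using simple_functionD(1)[OF t(1)] finite_subset by blast
  qed
  moreover have "norm (s n x) \<le> 2 * norm (f x)" for n x
    unfolding s_def by auto
  moreover have "AE x in M. (\<lambda>n. s n x) \<longlonglongrightarrow> f x"
    using t(2)
  proof eventually_elim
    case (elim x)
    show ?case
    proof (cases "f x = 0")
      case True
      then have "s n x = 0" for n
        by (simp add: s_def)
      then show ?thesis
        using True by simp
    next
      case False
      have "(\<lambda>n. norm (t n x)) \<longlonglongrightarrow> norm (f x)"
        using elim by (rule tendsto_norm)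
      moreover have "norm (f x) < 2 * norm (f x)"
        using False by simp
      ultimately have "eventually (\<lambda>n. norm (t n x) < 2 * norm (f x)) sequentially"
        by (rule order_tendstoD)
      then have "eventually (\<lambda>n. t n x = s n x) sequentially"
        by eventually_elim (simp add: s_def)
      then show ?thesis
        using elim by (rule Lim_transform_eventually[rotated])
    qed
  qed
  ultimately show ?thesis
    using that by blast
qed

lemma L1_simple_approx:
  fixes f :: "'a \<Rightarrow> 'b::real_normed_vector"
  assumes "complete_measure M" and f: "f \<in> L1 M" and "e > 0"
  obtains s where "simple_function M s" and "integrable M (\<lambda>x. norm (f x - s x))"
    and "(\<integral>x. norm (f x - s x) \<partial>M) < e"
proof -
  have nf: "(\<lambda>x. norm (f x)) \<in> borel_measurable M"
    using L1D(2)[OF assms(1) f] by (rule borel_measurable_integrable)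
  obtain s where s: "\<And>n. simple_function M (s n)" and s_le: "\<And>n x. norm (s n x) \<le> 2 * norm (f x)"
    and lim: "AE x in M. (\<lambda>n. s n x) \<longlonglongrightarrow> f x"
    using strongly_measurable_dominated_simple_seq[OF L1D(1)[OF assms(1) f] nf] by blast
  have meas: "(\<lambda>x. norm (f x - s n x)) \<in> borel_measurable M" for n
    using L1D(1)[OF assms(1) f] strongly_measurable_simple_function[OF s]
    by (intro borel_measurable_strongly_measurable[OF assms(1)] strongly_measurable_norm
        strongly_measurable_diff)
  have dominated: "AE x in M. norm (norm (f x - s n x)) \<le> 3 * norm (f x)" for n
  proof (rule AE_I2)
    fix x
    show "norm (norm (f x - s n x)) \<le> 3 * norm (f x)"
      using norm_triangle_ineq4[of "f x" "s n x"] s_le[of n x] by simp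
  qed
  have int3: "integrable M (\<lambda>x. 3 * norm (f x))"
    using L1D(2)[OF assms(1) f] by simp
  have "AE x in M. (\<lambda>n. norm (f x - s n x)) \<longlonglongrightarrow> 0"
    using lim
  proof eventually_elim
    case (elim x)
    have "(\<lambda>n. norm (f x - s n x)) \<longlonglongrightarrow> norm (f x - f x)"
      by (intro tendsto_intros elim)
    then show ?case
      by simp
  qed
  then have "(\<lambda>n. \<integral>x. norm (f x - s n x) \<partial>M) \<longlonglongrightarrow> (\<integral>x. 0 \<partial>M)"
    by (intro integral_dominated_convergence[OF borel_measurable_const meas int3 _ dominated])
  then have "eventually (\<lambda>n. (\<integral>x. norm (f x - s n x) \<partial>M) < e) sequentially"
    using \<open>e > 0\<close> by (intro order_tendstoD(2)) auto
  then obtain n where "(\<integral>x. norm (f x - s n x) \<partial>M) < e"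
    by (auto simp: eventually_sequentially)
  show ?thesis
  proof (rule that)
    show "simple_function M (s n)"
      by (rule s)
    show "integrable M (\<lambda>x. norm (f x - s n x))"
      by (rule Bochner_Integration.integrable_bound[OF int3 meas]) (use dominated in auto)
  qed fact
qed

lemma integrable_pairing:
  fixes s :: "'a \<Rightarrow> 'c" and F :: "'c \<Rightarrow> 'b::real_normed_vector \<Rightarrow> real"
  assumes "complete_measure M" and s: "simple_function M s"
    and F: "\<And>c. bounded_linear (F c)" "\<And>c w. \<bar>F c w\<bar> \<le> norm w"
    and h: "h \<in> borel_measurable M" and bound: "\<And>x. x \<in> space M \<Longrightarrow> \<bar>h x\<bar> \<le> H"
    and f: "f \<in> L1 M"
  shows "integrable M (\<lambda>x. h x * F (s x) (f x))"
proof -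
  have "strongly_measurable M (\<lambda>x. F (s x) (f x))"
    using s L1D(1)[OF assms(1) f] linear_continuous_on[OF F(1)] by (rule strongly_measurable_simple_compose)
  then have "(\<lambda>x. F (s x) (f x)) \<in> borel_measurable M"
    by (rule borel_measurable_strongly_measurable[OF assms(1)])
  then have "integrable M (\<lambda>x. F (s x) (f x))"
    by (rule Bochner_Integration.integrable_bound[OF L1D(2)[OF assms(1) f]]) (use F(2) in auto)
  then show ?thesis
    using h bound by (rule integrable_bounded_mult)
qed

lemma L1_dual_pairing:
  fixes s :: "'a \<Rightarrow> 'c" and F :: "'c \<Rightarrow> 'b::real_normed_vector \<Rightarrow> real"
  assumes "complete_measure M" and s: "simple_function M s"
    and F: "\<And>c. bounded_linear (F c)" "\<And>c w. \<bar>F c w\<bar> \<le> norm w"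
    and h: "h \<in> borel_measurable M" and bound: "\<And>x. x \<in> space M \<Longrightarrow> \<bar>h x\<bar> \<le> H"
  shows "(\<lambda>f. \<integral>x. h x * F (s x) (f x) \<partial>M) \<in> L1_dual M"
proof -
  have int: "integrable M (\<lambda>x. h x * F (s x) (f x))" if "f \<in> L1 M" for f
    by (rule integrable_pairing[where F=F, OF assms(1) s F(1,2) h bound that])
  have "(\<integral>x. h x * F (s x) (f x + g x) \<partial>M) =
      (\<integral>x. h x * F (s x) (f x) \<partial>M) + (\<integral>x. h x * F (s x) (g x) \<partial>M)"
    if "f \<in> L1 M" "g \<in> L1 M" for f g
    using Bochner_Integration.integral_add[OF int[OF that(1)] int[OF that(2)]]
    by (simp add: linear_add[OF bounded_linear.linear[OF F(1)]] distrib_left)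
  moreover have "(\<integral>x. h x * F (s x) (c *\<^sub>R f x) \<partial>M) = c * (\<integral>x. h x * F (s x) (f x) \<partial>M)" for c f
    by (simp add: linear_scale[OF bounded_linear.linear[OF F(1)]] mult.left_commute)
  moreover have "\<bar>\<integral>x. h x * F (s x) (f x) \<partial>M\<bar> \<le> H * L1norm M f" if f: "f \<in> L1 M" for f
  proof -
    have "\<bar>\<integral>x. h x * F (s x) (f x) \<partial>M\<bar> \<le> (\<integral>x. \<bar>h x * F (s x) (f x)\<bar> \<partial>M)"
      by (rule integral_abs_bound)
    also have "\<dots> \<le> (\<integral>x. H * norm (f x) \<partial>M)"
    proof (rule integral_mono)
      show "integrable M (\<lambda>x. \<bar>h x * F (s x) (f x)\<bar>)"
        using int[OF f] by simp
      show "integrable M (\<lambda>x. H * norm (f x))"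
        using L1D(2)[OF assms(1) f] by simp
      show "\<bar>h x * F (s x) (f x)\<bar> \<le> H * norm (f x)" if "x \<in> space M" for x
        unfolding abs_mult using bound[OF that] F(2) by (intro mult_mono) force+
    qed
    also have "\<dots> = H * L1norm M f"
      using L1D(3)[OF assms(1) f] by simp
    finally show ?thesis .
  qed
  ultimately show ?thesis
    unfolding L1_dual_def by blast
qed

lemma L1_weighted_norming_functional:
  fixes x :: "'a \<Rightarrow> 'b::real_normed_vector"
  assumes "complete_measure M" and x: "x \<in> L1 M" and h: "h \<in> borel_measurable M"
    and h_bounds: "\<And>\<omega>. \<omega> \<in> space M \<Longrightarrow> 0 \<le> h \<omega> \<and> h \<omega> \<le> H" and "\<eta> > 0"
  obtains \<Theta> where "\<Theta> \<in> L1_dual M" and "(\<integral>\<omega>. h \<omega> * norm (x \<omega>) \<partial>M) - \<eta> \<le> \<Theta> x"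
    and "\<And>y. y \<in> L1 M \<Longrightarrow> \<Theta> y \<le> (\<integral>\<omega>. h \<omega> * norm (y \<omega>) \<partial>M)"
proof -
  obtain F :: "'b \<Rightarrow> 'b \<Rightarrow> real" where F: "\<And>c. bounded_linear (F c)"
    "\<And>c w. \<bar>F c w\<bar> \<le> norm w" "\<And>c. F c c = norm c"
    using Hahn_Banach_norming_functional by metis
  define C where "C = 2 * (\<bar>H\<bar> + 1)"
  have "C > 0"
    unfolding C_def by simp
  obtain s where s: "simple_function M s" "integrable M (\<lambda>\<omega>. norm (x \<omega> - s \<omega>))"
    "(\<integral>\<omega>. norm (x \<omega> - s \<omega>) \<partial>M) < \<eta> / C"
    using L1_simple_approx[OF assms(1) x, of "\<eta> / C"] \<open>\<eta> > 0\<close> \<open>C > 0\<close> by auto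
  define \<Theta> where "\<Theta> f = (\<integral>\<omega>. h \<omega> * F (s \<omega>) (f \<omega>) \<partial>M)" for f
  have habs: "\<And>\<omega>. \<omega> \<in> space M \<Longrightarrow> \<bar>h \<omega>\<bar> \<le> H"
    using h_bounds by fastforce
  have int: "integrable M (\<lambda>\<omega>. h \<omega> * F (s \<omega>) (y \<omega>))" if "y \<in> L1 M" for y
    by (rule integrable_pairing[where F=F, OF assms(1) s(1) F(1,2) h habs that])
  have hx: "integrable M (\<lambda>\<omega>. h \<omega> * norm (x \<omega>))"
    using L1D(2)[OF assms(1) x] h habs by (rule integrable_bounded_mult)
  have "\<Theta> \<in> L1_dual M"
    unfolding \<Theta>_def by (rule L1_dual_pairing[where F=F, OF assms(1) s(1) F(1,2) h habs])
  moreover have "(\<integral>\<omega>. h \<omega> * norm (x \<omega>) \<partial>M) - \<eta> \<le> \<Theta> x"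
  proof -
    have "(\<integral>\<omega>. h \<omega> * norm (x \<omega>) - C * norm (x \<omega> - s \<omega>) \<partial>M) \<le> \<Theta> x"
      unfolding \<Theta>_def
    proof (rule integral_mono)
      show "integrable M (\<lambda>\<omega>. h \<omega> * norm (x \<omega>) - C * norm (x \<omega> - s \<omega>))"
        using hx s(2) by simp
      show "integrable M (\<lambda>\<omega>. h \<omega> * F (s \<omega>) (x \<omega>))"
        by (rule int[OF x])
      fix \<omega>
      assume "\<omega> \<in> space M"
      have "F (s \<omega>) (x \<omega>) = F (s \<omega>) (s \<omega>) + F (s \<omega>) (x \<omega> - s \<omega>)"
        using linear_add[OF bounded_linear.linear[OF F(1)], of "s \<omega>" "s \<omega>" "x \<omega> - s \<omega>"] by simp
      then have "F (s \<omega>) (x \<omega>) = norm (s \<omega>) + F (s \<omega>) (x \<omega> - s \<omega>)"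
        using F(3) by simp
      moreover have "norm (x \<omega>) \<le> norm (s \<omega>) + norm (x \<omega> - s \<omega>)"
        using norm_triangle_ineq[of "s \<omega>" "x \<omega> - s \<omega>"] by simp
      ultimately have "norm (x \<omega>) - 2 * norm (x \<omega> - s \<omega>) \<le> F (s \<omega>) (x \<omega>)"
        using F(2)[of "s \<omega>" "x \<omega> - s \<omega>"] by linarith
      then have "h \<omega> * (norm (x \<omega>) - 2 * norm (x \<omega> - s \<omega>)) \<le> h \<omega> * F (s \<omega>) (x \<omega>)"
        using h_bounds[OF \<open>\<omega> \<in> space M\<close>] by (intro mult_left_mono) auto
      moreover have "h \<omega> * (2 * norm (x \<omega> - s \<omega>)) \<le> C * norm (x \<omega> - s \<omega>)"
      proof -
        have "2 * h \<omega> \<le> C"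
          using h_bounds[OF \<open>\<omega> \<in> space M\<close>] abs_ge_self[of H] unfolding C_def by auto
        from mult_right_mono[OF this norm_ge_zero[of "x \<omega> - s \<omega>"]] show ?thesis
          by (simp add: mult_ac)
      qed
      ultimately show "h \<omega> * norm (x \<omega>) - C * norm (x \<omega> - s \<omega>) \<le> h \<omega> * F (s \<omega>) (x \<omega>)"
        by (simp add: right_diff_distrib)
    qed
    moreover have "C * (\<integral>\<omega>. norm (x \<omega> - s \<omega>) \<partial>M) < \<eta>"
      using s(3) \<open>C > 0\<close> by (simp add: field_simps)
    ultimately show ?thesis
      using hx s(2) by simp
  qed
  moreover have "\<Theta> y \<le> (\<integral>\<omega>. h \<omega> * norm (y \<omega>) \<partial>M)" if y: "y \<in> L1 M" for y
    unfolding \<Theta>_def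
  proof (rule integral_mono)
    show "integrable M (\<lambda>\<omega>. h \<omega> * F (s \<omega>) (y \<omega>))"
      by (rule int[OF y])
    show "integrable M (\<lambda>\<omega>. h \<omega> * norm (y \<omega>))"
      using L1D(2)[OF assms(1) y] h habs by (rule integrable_bounded_mult)
    show "h \<omega> * F (s \<omega>) (y \<omega>) \<le> h \<omega> * norm (y \<omega>)" if "\<omega> \<in> space M" for \<omega>
      using F(2)[of "s \<omega>" "y \<omega>"] h_bounds[OF that] by (intro mult_left_mono) auto
  qed
  ultimately show ?thesis
    by (rule that)
qed

section \<open>Rebalancing convex weights\<close>

lemma convex_weights_deviation:
  fixes c a :: "nat \<Rightarrow> real"
  assumes c: "\<And>j. j < m \<Longrightarrow> c j > 0" "(\<Sum>j<m. c j) = 1"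
    and a: "\<And>j. j < m \<Longrightarrow> 1 - t \<le> a j" and mean: "(\<Sum>j<m. c j * a j) \<le> 1"
    and "0 \<le> t" and k: "k < m"
  shows "\<bar>a k - (\<Sum>j<m. c j * a j)\<bar> \<le> t / c k"
proof -
  define Y where "Y = (\<Sum>j<m. c j * a j)"
  have ck: "0 < c k" "c k \<le> 1"
    using c k member_le_sum[of k "{..<m}" c] by (auto simp: less_imp_le)
  have "t \<le> t / c k"
    using ck \<open>0 \<le> t\<close> by (simp add: le_divide_eq mult_left_le)
  then have lower: "Y - a k \<le> t / c k"
    using a[OF k] mean unfolding Y_def by linarith
  have "(\<Sum>j\<in>{..<m}-{k}. c j * (1 - t)) \<le> (\<Sum>j\<in>{..<m}-{k}. c j * a j)"
    using c a by (intro sum_mono mult_left_mono) (auto simp: less_imp_le)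
  moreover have "(\<Sum>j\<in>{..<m}-{k}. c j * (1 - t)) = (1 - c k) * (1 - t)"
    using c(2) k by (simp add: sum_distrib_right[symmetric] sum_diff1)
  moreover have "Y = c k * a k + (\<Sum>j\<in>{..<m}-{k}. c j * a j)"
    unfolding Y_def using k by (simp add: sum_diff1)
  ultimately have "c k * (a k - Y) \<le> (1 - c k) * (Y - 1 + t)"
    by (simp add: algebra_simps)
  also have "\<dots> \<le> (1 - c k) * t"
    using ck mean unfolding Y_def by (intro mult_left_mono) auto
  also have "\<dots> \<le> t"
    using ck \<open>0 \<le> t\<close> by (simp add: mult_left_le_one_le)
  finally have "a k - Y \<le> t / c k"
    using ck by (simp add: le_divide_eq mult.commute)
  then show ?thesis
    using lower unfolding Y_def by linarith
qed

lemma rebalance_coefficients: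
  fixes c a :: "nat \<Rightarrow> real"
  assumes c: "\<And>j. j < m \<Longrightarrow> c j > 0" "(\<Sum>j<m. c j) = 1"
    and a: "\<And>j. j < m \<Longrightarrow> a j > 0" and Y: "(\<Sum>j<m. c j * a j) = Y"
  obtains \<rho> \<beta> :: "nat \<Rightarrow> real"
  where "\<And>k. k < m \<Longrightarrow> 0 \<le> \<rho> k \<and> \<rho> k \<le> 1" and "\<And>k. k < m \<Longrightarrow> \<rho> k * a k = min (a k) Y"
    and "\<And>k. k < m \<Longrightarrow> 0 \<le> \<beta> k \<and> c k * \<beta> k \<le> 1"
    and "\<And>k. k < m \<Longrightarrow> \<beta> k * (\<Sum>j<m. c j * (1 - \<rho> j) * a j) = max 0 (Y - a k)"
    and "(\<Sum>k<m. c k * \<beta> k) = 1 \<or> (\<forall>k<m. \<rho> k = 1)"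
proof -
  define \<rho> where "\<rho> k = min 1 (Y / a k)" for k
  define D where "D = (\<Sum>j<m. c j * max 0 (Y - a j))"
  define \<beta> where "\<beta> k = max 0 (Y - a k) / D" for k
  have "0 \<le> Y"
    unfolding Y[symmetric] using a c by (intro sum_nonneg) (auto intro: less_imp_le)
  have \<rho>_bounds: "0 \<le> \<rho> k \<and> \<rho> k \<le> 1" if "k < m" for k
    unfolding \<rho>_def using \<open>0 \<le> Y\<close> a[OF that] by simp
  have \<rho>_a: "\<rho> k * a k = min (a k) Y" if "k < m" for k
    unfolding \<rho>_def using a[OF that] by (auto simp: min_def field_simps)
  have excess: "(1 - \<rho> k) * a k = max 0 (a k - Y)" if "k < m" for k
    using \<rho>_a[OF that] by (auto simp: algebra_simps min_def max_def)
  have "(\<Sum>j<m. c j * max 0 (a j - Y)) - D = (\<Sum>j<m. c j * (a j - Y))"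
    unfolding D_def sum_subtractf[symmetric] by (intro sum.cong) (auto simp: max_def algebra_simps)
  also have "\<dots> = 0"
    using Y c(2) by (simp add: right_diff_distrib sum_subtractf sum_distrib_right[symmetric])
  finally have D: "(\<Sum>j<m. c j * (1 - \<rho> j) * a j) = D"
    using excess by (simp add: mult.assoc)
  have D_nonneg: "0 \<le> D"
    unfolding D_def using c(1) by (intro sum_nonneg mult_nonneg_nonneg) (auto simp: less_imp_le)
  have c_\<beta>_sum: "(\<Sum>k<m. c k * \<beta> k) = (if D = 0 then 0 else 1)"
    unfolding \<beta>_def D_def by (simp add: sum_divide_distrib[symmetric] mult.commute)
  have \<beta>_bounds: "0 \<le> \<beta> k \<and> c k * \<beta> k \<le> 1" if k: "k < m" for k
  proof -
    have "0 \<le> \<beta> k"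
      unfolding \<beta>_def using D_nonneg by simp
    moreover have "c k * \<beta> k \<le> (\<Sum>k<m. c k * \<beta> k)"
      using k c(1) D_nonneg unfolding \<beta>_def
      by (intro member_le_sum mult_nonneg_nonneg) (auto simp: less_imp_le)
    ultimately show ?thesis
      using c_\<beta>_sum by (auto split: if_splits)
  qed
  have \<beta>_D: "\<beta> k * (\<Sum>j<m. c j * (1 - \<rho> j) * a j) = max 0 (Y - a k)" if k: "k < m" for k
  proof (cases "D = 0")
    case True
    have "\<forall>j\<in>{..<m}. c j * max 0 (Y - a j) = 0"
      using True c(1) sum_nonneg_eq_0_iff[of "{..<m}" "\<lambda>j. c j * max 0 (Y - a j)"]
      unfolding D_def by (simp add: less_imp_le)
    then have "c k * max 0 (Y - a k) = 0"
      using k by blast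
    then show ?thesis
      using True D c(1)[OF k] by simp
  next
    case False
    then show ?thesis
      unfolding D \<beta>_def by simp
  qed
  have \<rho>_one: "\<rho> k = 1" if "D = 0" "k < m" for k
  proof -
    have "\<forall>j\<in>{..<m}. 0 \<le> c j * ((1 - \<rho> j) * a j)"
      using c(1) \<rho>_bounds a by (auto intro!: mult_nonneg_nonneg simp: less_imp_le)
    then have "\<forall>j\<in>{..<m}. c j * ((1 - \<rho> j) * a j) = 0"
      using that(1) D sum_nonneg_eq_0_iff[of "{..<m}" "\<lambda>j. c j * ((1 - \<rho> j) * a j)"]
      by (simp add: mult.assoc)
    then have "c k * ((1 - \<rho> k) * a k) = 0"
      using that(2) by blast
    then show ?thesis
      using c(1)[OF that(2)] a[OF that(2)] by simp
  qed
  show ?thesis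
  proof (rule that)
    show "(\<Sum>k<m. c k * \<beta> k) = 1 \<or> (\<forall>k<m. \<rho> k = 1)"
      using c_\<beta>_sum \<rho>_one by auto
  qed (use \<rho>_bounds \<rho>_a \<beta>_bounds \<beta>_D in auto)
qed

lemma sum_weighted_integrals:
  fixes c :: "nat \<Rightarrow> real" and h :: "nat \<Rightarrow> 'a \<Rightarrow> real"
  assumes "\<And>j. j < m \<Longrightarrow> integrable M (\<lambda>x. h j x * \<nu> x)" and "\<And>x. (\<Sum>j<m. c j * h j x) = 1"
  shows "(\<Sum>j<m. c j * (\<integral>x. h j x * \<nu> x \<partial>M)) = (\<integral>x. \<nu> x \<partial>M)"
proof -
  have "(\<Sum>j<m. c j * (\<integral>x. h j x * \<nu> x \<partial>M)) = (\<integral>x. (\<Sum>j<m. c j * (h j x * \<nu> x)) \<partial>M)"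
    using assms(1) by (simp add: Bochner_Integration.integral_sum)
  also have "\<dots> = (\<integral>x. \<nu> x \<partial>M)"
    using assms(2) by (simp add: sum_distrib_right[symmetric] mult.assoc[symmetric])
  finally show ?thesis .
qed

lemma rebalance_pointwise:
  fixes c \<rho> \<beta> w :: "nat \<Rightarrow> real"
  assumes c: "\<And>j. j < m \<Longrightarrow> c j > 0"
    and \<rho>: "\<And>j. j < m \<Longrightarrow> 0 \<le> \<rho> j \<and> \<rho> j \<le> 1"
    and \<beta>: "\<And>j. j < m \<Longrightarrow> 0 \<le> \<beta> j \<and> c j * \<beta> j \<le> 1"
    and \<beta>_sum: "(\<Sum>k<m. c k * \<beta> k) = 1 \<or> (\<forall>k<m. \<rho> k = 1)"
    and w: "\<And>j. j < m \<Longrightarrow> 0 \<le> w j \<and> w j \<le> 1 / c j"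
    and w_sum: "(\<Sum>j<m. c j * w j) = 1"
  defines "R \<equiv> (\<Sum>j<m. c j * (1 - \<rho> j) * w j)"
  shows "(\<Sum>k<m. c k * (\<rho> k * w k + \<beta> k * R)) = 1"
    and "\<And>k. k < m \<Longrightarrow> 0 \<le> \<rho> k * w k + \<beta> k * R \<and> \<rho> k * w k + \<beta> k * R \<le> 2 / c k"
    and "\<And>k. k < m \<Longrightarrow> \<bar>\<rho> k * w k + \<beta> k * R - w k\<bar> \<le> \<beta> k * R + (1 - \<rho> k) * w k"
proof -
  have term_bounds: "0 \<le> c j * (1 - \<rho> j) * w j \<and> c j * (1 - \<rho> j) * w j \<le> c j * w j" if "j < m" for j
  proof -
    have "0 \<le> c j * w j" and "0 \<le> 1 - \<rho> j" and "1 - \<rho> j \<le> 1"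
      using c[OF that] w[OF that] \<rho>[OF that] by auto
    then have "0 \<le> c j * w j * (1 - \<rho> j)" and "c j * w j * (1 - \<rho> j) \<le> c j * w j"
      by (simp, rule mult_right_le_one_le)
    then show ?thesis
      by (simp add: mult_ac)
  qed
  have "0 \<le> R"
    unfolding R_def using term_bounds by (intro sum_nonneg) auto
  have "R \<le> (\<Sum>j<m. c j * w j)"
    unfolding R_def using term_bounds by (intro sum_mono) auto
  then have "R \<le> 1"
    using w_sum by simp
  have "(\<Sum>k<m. c k * \<rho> k * w k) + R = (\<Sum>j<m. c j * w j)"
    unfolding R_def sum.distrib[symmetric] by (intro sum.cong) (auto simp: algebra_simps)
  moreover have "(\<Sum>k<m. c k * (\<rho> k * w k + \<beta> k * R)) = (\<Sum>k<m. c k * \<rho> k * w k) + (\<Sum>k<m. c k * \<beta> k) * R"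
    by (simp add: distrib_left sum.distrib sum_distrib_right mult.assoc)
  moreover have "R = 0" if "\<forall>k<m. \<rho> k = 1"
    unfolding R_def using that by simp
  ultimately show "(\<Sum>k<m. c k * (\<rho> k * w k + \<beta> k * R)) = 1"
    using \<beta>_sum w_sum by auto
  fix k
  assume k: "k < m"
  have "\<rho> k * w k \<le> w k"
    using \<rho>[OF k] w[OF k] by (intro mult_left_le_one_le) auto
  moreover have "\<beta> k * R \<le> \<beta> k"
    using \<beta>[OF k] \<open>0 \<le> R\<close> \<open>R \<le> 1\<close> by (intro mult_right_le_one_le) auto
  moreover have "\<beta> k \<le> 1 / c k"
    using \<beta>[OF k] c[OF k] by (simp add: le_divide_eq mult.commute)
  moreover have "0 \<le> \<rho> k * w k" "0 \<le> \<beta> k * R" "0 \<le> (1 - \<rho> k) * w k"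
    using \<rho>[OF k] w[OF k] \<beta>[OF k] \<open>0 \<le> R\<close> by simp_all
  moreover have "2 / c k = 1 / c k + 1 / c k"
    by simp
  ultimately show "0 \<le> \<rho> k * w k + \<beta> k * R \<and> \<rho> k * w k + \<beta> k * R \<le> 2 / c k"
    using w[OF k] by linarith
  have "\<rho> k * w k + \<beta> k * R - w k = \<beta> k * R - (1 - \<rho> k) * w k"
    by (simp add: algebra_simps)
  moreover have "\<bar>\<beta> k * R - (1 - \<rho> k) * w k\<bar> \<le> \<bar>\<beta> k * R\<bar> + \<bar>(1 - \<rho> k) * w k\<bar>"
    by (rule abs_triangle_ineq4)
  ultimately show "\<bar>\<rho> k * w k + \<beta> k * R - w k\<bar> \<le> \<beta> k * R + (1 - \<rho> k) * w k"
    using \<open>0 \<le> \<beta> k * R\<close> \<open>0 \<le> (1 - \<rho> k) * w k\<close> by simp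
qed

lemma rebalance_weights:
  fixes c :: "nat \<Rightarrow> real" and h :: "nat \<Rightarrow> 'a \<Rightarrow> real"
  assumes c: "\<And>j. j < m \<Longrightarrow> c j > 0" "(\<Sum>j<m. c j) = 1"
    and h: "\<And>j. j < m \<Longrightarrow> h j \<in> borel_measurable M"
    and h_bounds: "\<And>j x. j < m \<Longrightarrow> 0 \<le> h j x \<and> h j x \<le> 1 / c j"
    and h_sum: "\<And>x. (\<Sum>j<m. c j * h j x) = 1"
    and \<nu>: "integrable M \<nu>" "\<And>x. x \<in> space M \<Longrightarrow> 0 \<le> \<nu> x"
    and a_pos: "\<And>j. j < m \<Longrightarrow> 0 < (\<integral>x. h j x * \<nu> x \<partial>M)"
  obtains g where "\<And>x. (\<Sum>k<m. c k * g k x) = 1"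
    and "\<And>k. k < m \<Longrightarrow> g k \<in> borel_measurable M"
    and "\<And>k x. k < m \<Longrightarrow> 0 \<le> g k x \<and> g k x \<le> 2 / c k"
    and "\<And>k. k < m \<Longrightarrow> (\<integral>x. g k x * \<nu> x \<partial>M) = (\<integral>x. \<nu> x \<partial>M)"
    and "\<And>k. k < m \<Longrightarrow>
      (\<integral>x. \<bar>g k x - h k x\<bar> * \<nu> x \<partial>M) \<le> \<bar>(\<integral>x. h k x * \<nu> x \<partial>M) - (\<integral>x. \<nu> x \<partial>M)\<bar>"
proof -
  define a where "a j = (\<integral>x. h j x * \<nu> x \<partial>M)" for j
  define Y where "Y = (\<integral>x. \<nu> x \<partial>M)"
  have h_int: "integrable M (\<lambda>x. h j x * \<nu> x)" if "j < m" for j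
    using \<nu>(1) h[OF that] by (rule integrable_bounded_mult) (use h_bounds that in fastforce)
  have mean: "(\<Sum>j<m. c j * a j) = Y"
    unfolding a_def Y_def using h_int h_sum by (rule sum_weighted_integrals)
  obtain \<rho> \<beta> where \<rho>: "\<And>k. k < m \<Longrightarrow> 0 \<le> \<rho> k \<and> \<rho> k \<le> 1" "\<And>k. k < m \<Longrightarrow> \<rho> k * a k = min (a k) Y"
    and \<beta>: "\<And>k. k < m \<Longrightarrow> 0 \<le> \<beta> k \<and> c k * \<beta> k \<le> 1"
      "\<And>k. k < m \<Longrightarrow> \<beta> k * (\<Sum>j<m. c j * (1 - \<rho> j) * a j) = max 0 (Y - a k)"
    and \<beta>_sum: "(\<Sum>k<m. c k * \<beta> k) = 1 \<or> (\<forall>k<m. \<rho> k = 1)"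
    by (rule rebalance_coefficients[where c=c and a=a]) (use c a_pos mean in \<open>auto simp: a_def\<close>)
  \<comment> \<open>Each weight gives up the part of its mass above \<open>Y\<close>; the pooled excess \<open>R\<close> is handed
    to the weights below \<open>Y\<close> in proportion to their deficits.\<close>
  define R where "R x = (\<Sum>j<m. c j * (1 - \<rho> j) * h j x)" for x
  define g where "g k x = \<rho> k * h k x + \<beta> k * R x" for k x
  have g_sum: "(\<Sum>k<m. c k * g k x) = 1" for x
    unfolding g_def R_def by (rule rebalance_pointwise(1)[where w="\<lambda>j. h j x"])
      (use c(1) \<rho>(1) \<beta>(1) \<beta>_sum h_bounds h_sum in auto)
  have g_bounds: "0 \<le> g k x \<and> g k x \<le> 2 / c k" if "k < m" for k x
    unfolding g_def R_def by (rule rebalance_pointwise(2)[where w="\<lambda>j. h j x"])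
      (use that c(1) \<rho>(1) \<beta>(1) \<beta>_sum h_bounds h_sum in auto)
  have g_dev: "\<bar>g k x - h k x\<bar> \<le> \<beta> k * R x + (1 - \<rho> k) * h k x" if "k < m" for k x
    unfolding g_def R_def by (rule rebalance_pointwise(3)[where w="\<lambda>j. h j x"])
      (use that c(1) \<rho>(1) \<beta>(1) \<beta>_sum h_bounds h_sum in auto)
  have term_int: "integrable M (\<lambda>x. c j * (1 - \<rho> j) * (h j x * \<nu> x))" if "j \<in> {..<m}" for j
    using h_int that by simp
  have R_eq: "(\<lambda>x. R x * \<nu> x) = (\<lambda>x. \<Sum>j<m. c j * (1 - \<rho> j) * (h j x * \<nu> x))"
    unfolding R_def by (simp add: sum_distrib_right mult.assoc)
  have R_int: "integrable M (\<lambda>x. R x * \<nu> x)"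
    unfolding R_eq using term_int by (rule Bochner_Integration.integrable_sum)
  have R_integral: "(\<integral>x. R x * \<nu> x \<partial>M) = (\<Sum>j<m. c j * (1 - \<rho> j) * a j)"
    unfolding R_eq a_def using term_int by (simp add: Bochner_Integration.integral_sum)
  have "R \<in> borel_measurable M"
    unfolding R_def
  proof (rule borel_measurable_sum)
    fix j
    assume "j \<in> {..<m}"
    then have "h j \<in> borel_measurable M"
      using h by simp
    then show "(\<lambda>x. c j * (1 - \<rho> j) * h j x) \<in> borel_measurable M"
      by measurable
  qed
  then have g_meas: "g k \<in> borel_measurable M" if "k < m" for k
    unfolding g_def using h[OF that] by measurable
  have g_mass: "(\<integral>x. g k x * \<nu> x \<partial>M) = Y" if "k < m" for k
  proof -
    have "(\<integral>x. g k x * \<nu> x \<partial>M) = \<rho> k * a k + \<beta> k * (\<integral>x. R x * \<nu> x \<partial>M)"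
      unfolding g_def a_def using h_int[OF that] R_int by (simp add: distrib_right mult.assoc)
    then show ?thesis
      using \<rho>(2)[OF that] \<beta>(2)[OF that] R_integral by (simp add: min_def max_def)
  qed
  have g_deviation: "(\<integral>x. \<bar>g k x - h k x\<bar> * \<nu> x \<partial>M) \<le> \<bar>a k - Y\<bar>" if k: "k < m" for k
  proof -
    have "(\<integral>x. \<bar>g k x - h k x\<bar> * \<nu> x \<partial>M) \<le> (\<integral>x. \<beta> k * (R x * \<nu> x) + (1 - \<rho> k) * (h k x * \<nu> x) \<partial>M)"
    proof (rule integral_mono)
      show "integrable M (\<lambda>x. \<bar>g k x - h k x\<bar> * \<nu> x)"
      proof (rule integrable_bounded_mult[OF \<nu>(1)])
        show "(\<lambda>x. \<bar>g k x - h k x\<bar>) \<in> borel_measurable M"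
          using g_meas[OF k] h[OF k] by measurable
        show "\<bar>\<bar>g k x - h k x\<bar>\<bar> \<le> 2 / c k" for x
          using g_bounds[OF k, of x] h_bounds[OF k, of x] c(1)[OF k] by (auto simp: abs_le_iff)
      qed
      show "integrable M (\<lambda>x. \<beta> k * (R x * \<nu> x) + (1 - \<rho> k) * (h k x * \<nu> x))"
        using R_int h_int[OF k] by simp
      show "\<bar>g k x - h k x\<bar> * \<nu> x \<le> \<beta> k * (R x * \<nu> x) + (1 - \<rho> k) * (h k x * \<nu> x)"
        if "x \<in> space M" for x
        using mult_right_mono[OF g_dev[OF k] \<nu>(2)[OF that]] by (simp add: algebra_simps)
    qed
    also have "\<dots> = \<beta> k * (\<integral>x. R x * \<nu> x \<partial>M) + (1 - \<rho> k) * a k"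
      unfolding a_def using h_int[OF k] R_int by simp
    also have "\<dots> = \<bar>a k - Y\<bar>"
      using \<rho>(2)[OF k] \<beta>(2)[OF k] R_integral by (simp add: algebra_simps min_def max_def)
    finally show ?thesis .
  qed
  show ?thesis
    by (rule that) (use g_sum g_meas g_bounds g_mass g_deviation in \<open>simp_all add: a_def Y_def\<close>)
qed

lemma L1_ball_rebalance:
  fixes c :: "nat \<Rightarrow> real" and h :: "nat \<Rightarrow> 'a \<Rightarrow> real" and y :: "'a \<Rightarrow> 'b::real_normed_vector"
  assumes "complete_measure M"
    and c: "\<And>j. j < m \<Longrightarrow> c j > 0" "(\<Sum>j<m. c j) = 1"
    and h: "\<And>j. j < m \<Longrightarrow> h j \<in> borel_measurable M"
    and h_bounds: "\<And>j x. j < m \<Longrightarrow> 0 \<le> h j x \<and> h j x \<le> 1 / c j"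
    and h_sum: "\<And>x. (\<Sum>j<m. c j * h j x) = 1"
    and y: "y \<in> L1_ball M" and t: "0 \<le> t" "t < 1"
    and mass: "\<And>j. j < m \<Longrightarrow> 1 - t \<le> (\<integral>x. h j x * norm (y x) \<partial>M)"
  obtains g where "\<And>k. k < m \<Longrightarrow> g k \<in> borel_measurable M"
    and "\<And>k x. k < m \<Longrightarrow> \<bar>g k x\<bar> \<le> 2 / c k"
    and "\<And>k. k < m \<Longrightarrow> (\<lambda>x. g k x *\<^sub>R y x) \<in> L1_ball M"
    and "y = (\<lambda>x. \<Sum>k<m. c k *\<^sub>R (g k x *\<^sub>R y x))"
    and "\<And>k. k < m \<Longrightarrow> (\<integral>x. \<bar>g k x - h k x\<bar> * norm (y x) \<partial>M) \<le> t / c k"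
proof -
  have yL1: "y \<in> L1 M" and "L1norm M y \<le> 1"
    using y unfolding L1_ball_def by auto
  note y_int = L1D(2)[OF assms(1) yL1]
  have y_norm: "(\<integral>x. norm (y x) \<partial>M) \<le> 1"
    using \<open>L1norm M y \<le> 1\<close> L1D(3)[OF assms(1) yL1] by simp
  have h_int: "integrable M (\<lambda>x. h j x * norm (y x))" if "j < m" for j
    using y_int h[OF that] by (rule integrable_bounded_mult) (use h_bounds that in fastforce)
  obtain g where g_sum: "\<And>x. (\<Sum>k<m. c k * g k x) = 1"
    and g_meas: "\<And>k. k < m \<Longrightarrow> g k \<in> borel_measurable M"
    and g_bounds: "\<And>k x. k < m \<Longrightarrow> 0 \<le> g k x \<and> g k x \<le> 2 / c k"
    and g_mass: "\<And>k. k < m \<Longrightarrow> (\<integral>x. g k x * norm (y x) \<partial>M) = (\<integral>x. norm (y x) \<partial>M)"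
    and g_dev: "\<And>k. k < m \<Longrightarrow> (\<integral>x. \<bar>g k x - h k x\<bar> * norm (y x) \<partial>M)
      \<le> \<bar>(\<integral>x. h k x * norm (y x) \<partial>M) - (\<integral>x. norm (y x) \<partial>M)\<bar>"
  proof (rule rebalance_weights[where c=c and h=h and \<nu>="\<lambda>x. norm (y x)"])
    show "0 < (\<integral>x. h j x * norm (y x) \<partial>M)" if "j < m" for j
      using mass[OF that] t by linarith
  qed (use c h h_bounds h_sum y_int in auto)
  have g_abs: "\<bar>g k x\<bar> \<le> 2 / c k" if "k < m" for k x
    using g_bounds[OF that] by simp
  have g_ball: "(\<lambda>x. g k x *\<^sub>R y x) \<in> L1_ball M" if "k < m" for k
  proof -
    have "L1norm M (\<lambda>x. g k x *\<^sub>R y x) = (\<integral>x. g k x * norm (y x) \<partial>M)"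
      using L1norm_scaleR[OF assms(1) yL1 g_meas[OF that] g_abs[OF that]] g_bounds[OF that]
      by simp
    then show ?thesis
      unfolding L1_ball_def using L1_scaleR[OF assms(1) yL1 g_meas[OF that] g_abs[OF that]]
        g_mass[OF that] y_norm by simp
  qed
  have y_split: "y = (\<lambda>x. \<Sum>k<m. c k *\<^sub>R (g k x *\<^sub>R y x))"
    using g_sum by (simp add: scaleR_sum_left[symmetric])
  have g_close: "(\<integral>x. \<bar>g k x - h k x\<bar> * norm (y x) \<partial>M) \<le> t / c k" if "k < m" for k
  proof -
    have mean: "(\<Sum>j<m. c j * (\<integral>x. h j x * norm (y x) \<partial>M)) = (\<integral>x. norm (y x) \<partial>M)"
      using h_int h_sum by (rule sum_weighted_integrals)
    have "\<bar>(\<integral>x. h k x * norm (y x) \<partial>M) - (\<Sum>j<m. c j * (\<integral>x. h j x * norm (y x) \<partial>M))\<bar> \<le> t / c k"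
      by (rule convex_weights_deviation[where a="\<lambda>j. \<integral>x. h j x * norm (y x) \<partial>M"])
        (use c mass mean y_norm t that in auto)
    then have "\<bar>(\<integral>x. h k x * norm (y x) \<partial>M) - (\<integral>x. norm (y x) \<partial>M)\<bar> \<le> t / c k"
      unfolding mean .
    then show ?thesis
      using g_dev[OF that] by linarith
  qed
  show ?thesis
    by (rule that) (use g_meas g_abs g_ball y_split g_close in auto)
qed

section \<open>Convex combinations of relatively weakly open sets\<close>

lemma L1_convex_combination_norm_one:
  fixes u :: "nat \<Rightarrow> 'a \<Rightarrow> 'b::real_normed_vector"
  assumes "complete_measure M"
    and c: "\<And>j. j < m \<Longrightarrow> c j > 0" "(\<Sum>j<m. c j) = 1"
    and u: "\<And>j. j < m \<Longrightarrow> u j \<in> L1_ball M"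
    and x1: "L1norm M (\<lambda>\<omega>. \<Sum>j<m. c j *\<^sub>R u j \<omega>) = 1"
  shows "AE \<omega> in M. norm (\<Sum>j<m. c j *\<^sub>R u j \<omega>) = (\<Sum>j<m. c j * norm (u j \<omega>))"
    and "\<And>k. k < m \<Longrightarrow> L1norm M (u k) = 1"
proof -
  define x where "x \<omega> = (\<Sum>j<m. c j *\<^sub>R u j \<omega>)" for \<omega>
  define S where "S \<omega> = (\<Sum>j<m. c j * norm (u j \<omega>))" for \<omega>
  have uL1: "u j \<in> L1 M" if "j < m" for j
    using u[OF that] unfolding L1_ball_def by simp
  have u_norm: "(\<integral>\<omega>. norm (u j \<omega>) \<partial>M) \<le> 1" if "j < m" for j
    using u[OF that] L1D(3)[OF assms(1) uL1[OF that]] unfolding L1_ball_def by simp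
  have xL1: "x \<in> L1 M"
    unfolding x_def by (rule L1_convex_combination[OF assms(1)], rule uL1)
  have x_int: "integrable M (\<lambda>\<omega>. norm (x \<omega>))"
    using L1D(2)[OF assms(1) xL1] .
  have x_norm: "(\<integral>\<omega>. norm (x \<omega>) \<partial>M) = 1"
    using L1D(3)[OF assms(1) xL1] x1 unfolding x_def by simp
  have S_int: "integrable M S"
    unfolding S_def using L1D(2)[OF assms(1) uL1] by auto
  have S_integral: "(\<integral>\<omega>. S \<omega> \<partial>M) = (\<Sum>j<m. c j * (\<integral>\<omega>. norm (u j \<omega>) \<partial>M))"
    unfolding S_def using L1D(2)[OF assms(1) uL1] by (simp add: Bochner_Integration.integral_sum)
  have x_le_S: "norm (x \<omega>) \<le> S \<omega>" for \<omega>
    unfolding x_def S_def using c(1) norm_sum[of "\<lambda>j. c j *\<^sub>R u j \<omega>" "{..<m}"] by (simp add: less_imp_le)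
  have "(\<Sum>j<m. c j * (\<integral>\<omega>. norm (u j \<omega>) \<partial>M)) \<le> (\<Sum>j<m. c j * 1)"
    using c u_norm by (intro sum_mono mult_left_mono) (auto simp: less_imp_le)
  then have "(\<integral>\<omega>. S \<omega> \<partial>M) \<le> 1"
    using S_integral c(2) by simp
  moreover have "(\<integral>\<omega>. norm (x \<omega>) \<partial>M) \<le> (\<integral>\<omega>. S \<omega> \<partial>M)"
    using x_int S_int x_le_S by (intro integral_mono) auto
  ultimately have S_one: "(\<integral>\<omega>. S \<omega> \<partial>M) = 1"
    using x_norm by simp
  have "(\<integral>\<omega>. S \<omega> - norm (x \<omega>) \<partial>M) = 0"
    using S_int x_int S_one x_norm by simp
  then have "AE \<omega> in M. S \<omega> - norm (x \<omega>) = 0"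
    using S_int x_int x_le_S by (subst (asm) integral_nonneg_eq_0_iff_AE) auto
  then show "AE \<omega> in M. norm (\<Sum>j<m. c j *\<^sub>R u j \<omega>) = (\<Sum>j<m. c j * norm (u j \<omega>))"
    unfolding x_def S_def by auto
  fix k
  assume "k < m"
  have "(\<Sum>j<m. c j * (1 - (\<integral>\<omega>. norm (u j \<omega>) \<partial>M))) = 0"
    using S_integral S_one c(2) by (simp add: right_diff_distrib sum_subtractf)
  then have "\<forall>j\<in>{..<m}. c j * (1 - (\<integral>\<omega>. norm (u j \<omega>) \<partial>M)) = 0"
    using c(1) u_norm by (subst (asm) sum_nonneg_eq_0_iff) (auto simp: less_imp_le)
  then have "c k * (1 - (\<integral>\<omega>. norm (u k \<omega>) \<partial>M)) = 0"
    using \<open>k < m\<close> by blast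
  then show "L1norm M (u k) = 1"
    using c(1)[OF \<open>k < m\<close>] L1D(3)[OF assms(1) uL1[OF \<open>k < m\<close>]] by simp
qed

lemma rotund_L1_convex_combination_decompose:
  fixes u :: "nat \<Rightarrow> 'a \<Rightarrow> 'b::real_normed_vector"
  assumes "complete_measure M" and rotund: "rotund TYPE('b)"
    and c: "\<And>j. j < m \<Longrightarrow> c j > 0" "(\<Sum>j<m. c j) = 1"
    and u: "\<And>j. j < m \<Longrightarrow> u j \<in> L1_ball M"
    and x: "x = (\<lambda>\<omega>. \<Sum>j<m. c j *\<^sub>R u j \<omega>)" and x1: "L1norm M x = 1"
  obtains h where "\<And>k. k < m \<Longrightarrow> h k \<in> borel_measurable M"
    and "\<And>k \<omega>. k < m \<Longrightarrow> 0 \<le> h k \<omega> \<and> h k \<omega> \<le> 1 / c k"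
    and "\<And>\<omega>. (\<Sum>k<m. c k * h k \<omega>) = 1"
    and "\<And>k. k < m \<Longrightarrow> AE \<omega> in M. u k \<omega> = h k \<omega> *\<^sub>R x \<omega>"
    and "\<And>k. k < m \<Longrightarrow> (\<integral>\<omega>. h k \<omega> * norm (x \<omega>) \<partial>M) = 1"
proof -
  define S where "S \<omega> = (\<Sum>j<m. c j * norm (u j \<omega>))" for \<omega>
  \<comment> \<open>Where \<open>S \<omega> = 0\<close> all \<open>u k \<omega>\<close> vanish and any convex weights do; \<open>1\<close> keeps \<open>\<Sum>k<m. c k * h k \<omega> = 1\<close>.\<close>
  define h where "h k \<omega> = (if S \<omega> = 0 then 1 else norm (u k \<omega>) / S \<omega>)" for k \<omega>
  have uL1: "u j \<in> L1 M" if "j < m" for j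
    using u[OF that] unfolding L1_ball_def by simp
  have xL1: "x \<in> L1 M"
    unfolding x by (rule L1_convex_combination[OF assms(1)], rule uL1)
  have norm_ae: "AE \<omega> in M. norm (x \<omega>) = S \<omega>"
    unfolding x S_def
    by (rule L1_convex_combination_norm_one(1)[where c=c]) (use assms(1) c u x1[unfolded x] in auto)
  have u_unit: "L1norm M (u k) = 1" if "k < m" for k
    by (rule L1_convex_combination_norm_one(2)[where c=c and m=m]) (use assms(1) c u x1[unfolded x] that in auto)
  have S_nonneg: "0 \<le> S \<omega>" for \<omega>
    unfolding S_def using c(1) by (intro sum_nonneg mult_nonneg_nonneg) (auto simp: less_imp_le)
  have norm_meas: "(\<lambda>\<omega>. norm (u j \<omega>)) \<in> borel_measurable M" if "j < m" for j
    using L1D(2)[OF assms(1) uL1[OF that]] by (rule borel_measurable_integrable)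
  have "S \<in> borel_measurable M"
    unfolding S_def
  proof (rule borel_measurable_sum)
    fix j
    assume "j \<in> {..<m}"
    then have "(\<lambda>\<omega>. norm (u j \<omega>)) \<in> borel_measurable M"
      using norm_meas by simp
    then show "(\<lambda>\<omega>. c j * norm (u j \<omega>)) \<in> borel_measurable M"
      by measurable
  qed
  then have h_meas: "h k \<in> borel_measurable M" if "k < m" for k
    unfolding h_def using norm_meas[OF that] by measurable
  have h_bounds: "0 \<le> h k \<omega> \<and> h k \<omega> \<le> 1 / c k" if k: "k < m" for k \<omega>
  proof (cases "S \<omega> = 0")
    case True
    have "c k \<le> 1"
      using c k member_le_sum[of k "{..<m}" c] by (auto simp: less_imp_le)
    then show ?thesis
      unfolding h_def using True c(1)[OF k] by (simp add: le_divide_eq)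
  next
    case False
    have "c k * norm (u k \<omega>) \<le> S \<omega>"
      unfolding S_def using k c(1) by (intro member_le_sum mult_nonneg_nonneg) (auto simp: less_imp_le)
    then show ?thesis
      unfolding h_def using False S_nonneg[of \<omega>] c(1)[OF k] by (simp add: field_simps)
  qed
  have h_sum: "(\<Sum>k<m. c k * h k \<omega>) = 1" for \<omega>
  proof (cases "S \<omega> = 0")
    case True
    then show ?thesis
      unfolding h_def using c(2) by simp
  next
    case False
    then have "(\<Sum>k<m. c k * h k \<omega>) = (\<Sum>k<m. c k * norm (u k \<omega>) / S \<omega>)"
      unfolding h_def by simp
    also have "\<dots> = (\<Sum>k<m. c k * norm (u k \<omega>)) / S \<omega>"
      by (rule sum_divide_distrib[symmetric])
    finally show ?thesis
      using False unfolding S_def by simp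
  qed
  have u_eq: "AE \<omega> in M. u k \<omega> = h k \<omega> *\<^sub>R x \<omega>" if k: "k < m" for k
    using norm_ae
  proof eventually_elim
    case (elim \<omega>)
    have "u k \<omega> = (norm (u k \<omega>) / (\<Sum>j<m. c j * norm (u j \<omega>))) *\<^sub>R (\<Sum>j<m. c j *\<^sub>R u j \<omega>)"
      by (rule rotund_norm_sum_eq_imp_proportional[where c=c and w="\<lambda>j. u j \<omega>"])
        (use rotund c(1) k elim in \<open>auto simp: x S_def\<close>)
    then have "u k \<omega> = (norm (u k \<omega>) / S \<omega>) *\<^sub>R x \<omega>"
      unfolding x S_def by simp
    moreover have "x \<omega> = 0" if "S \<omega> = 0"
      using elim that by simp
    ultimately show ?case
      unfolding h_def by auto
  qed
  have h_mass: "(\<integral>\<omega>. h k \<omega> * norm (x \<omega>) \<partial>M) = 1" if k: "k < m" for k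
  proof -
    have "AE \<omega> in M. h k \<omega> * norm (x \<omega>) = norm (u k \<omega>)"
      using u_eq[OF k] by eventually_elim (use h_bounds[OF k] in simp)
    moreover have "(\<lambda>\<omega>. h k \<omega> * norm (x \<omega>)) \<in> borel_measurable M"
      using h_meas[OF k] borel_measurable_integrable[OF L1D(2)[OF assms(1) xL1]] by measurable
    ultimately have "(\<integral>\<omega>. h k \<omega> * norm (x \<omega>) \<partial>M) = (\<integral>\<omega>. norm (u k \<omega>) \<partial>M)"
      using norm_meas[OF k] by (intro integral_cong_AE) auto
    then show ?thesis
      using u_unit[OF k] L1D(3)[OF assms(1) uL1[OF k]] by simp
  qed
  show ?thesis
    by (rule that) (use h_meas h_bounds h_sum u_eq h_mass in auto)
qed

lemma rel_weakly_open_family_nbhds: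
  fixes m :: nat
  assumes U: "\<And>k. k < m \<Longrightarrow> rel_weakly_open M (U k)" and u: "\<And>k. k < m \<Longrightarrow> u k \<in> U k"
  obtains \<Phi> e B where "\<And>k. k < m \<Longrightarrow> finite (\<Phi> k) \<and> \<Phi> k \<subseteq> L1_dual M" and "e > 0" and "B > 0"
    and "\<And>k \<phi> f. k < m \<Longrightarrow> \<phi> \<in> \<Phi> k \<Longrightarrow> f \<in> L1 M \<Longrightarrow> \<bar>\<phi> f\<bar> \<le> B * L1norm M f"
    and "\<And>k. k < m \<Longrightarrow> {g \<in> L1_ball M. \<forall>\<phi>\<in>\<Phi> k. \<bar>\<phi> g - \<phi> (u k)\<bar> < e} \<subseteq> U k"
proof -
  have "\<forall>k. \<exists>p. k < m \<longrightarrow> finite (fst p) \<and> fst p \<subseteq> L1_dual M \<and> snd p > 0 \<and>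
      {g \<in> L1_ball M. \<forall>\<phi>\<in>fst p. \<bar>\<phi> g - \<phi> (u k)\<bar> < snd p} \<subseteq> U k"
  proof
    fix k
    show "\<exists>p. k < m \<longrightarrow> finite (fst p) \<and> fst p \<subseteq> L1_dual M \<and> snd p > 0 \<and>
      {g \<in> L1_ball M. \<forall>\<phi>\<in>fst p. \<bar>\<phi> g - \<phi> (u k)\<bar> < snd p} \<subseteq> U k"
    proof (cases "k < m")
      case True
      have "\<forall>f\<in>U k. \<exists>\<Phi> \<epsilon>. finite \<Phi> \<and> \<Phi> \<subseteq> L1_dual M \<and> \<epsilon> > 0 \<and>
          {g \<in> L1_ball M. \<forall>\<phi>\<in>\<Phi>. \<bar>\<phi> g - \<phi> f\<bar> < \<epsilon>} \<subseteq> U k"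
        using U[OF True] unfolding rel_weakly_open_def by (rule conjunct2)
      then obtain \<Phi> \<epsilon> where "finite \<Phi> \<and> \<Phi> \<subseteq> L1_dual M \<and> \<epsilon> > 0 \<and>
          {g \<in> L1_ball M. \<forall>\<phi>\<in>\<Phi>. \<bar>\<phi> g - \<phi> (u k)\<bar> < \<epsilon>} \<subseteq> U k"
        using u[OF True] by (elim ballE) auto
      then show ?thesis
        by (intro exI[of _ "(\<Phi>, \<epsilon>)"]) simp
    qed simp
  qed
  from choice[OF this] obtain p where p: "\<And>k. k < m \<Longrightarrow> finite (fst (p k)) \<and> fst (p k) \<subseteq> L1_dual M \<and>
      snd (p k) > 0 \<and> {g \<in> L1_ball M. \<forall>\<phi>\<in>fst (p k). \<bar>\<phi> g - \<phi> (u k)\<bar> < snd (p k)} \<subseteq> U k"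
    by blast
  define e where "e = Min (insert 1 ((\<lambda>k. snd (p k)) ` {..<m}))"
  have p_pos: "0 < snd (p k)" if k: "k < m" for k
    using p[OF k] by blast
  have "e > 0"
    unfolding e_def using p_pos by (subst Min_gr_iff) auto
  have e_le: "e \<le> snd (p k)" if k: "k < m" for k
    unfolding e_def using k by (intro Min_le) auto
  have nbhd: "{g \<in> L1_ball M. \<forall>\<phi>\<in>fst (p k). \<bar>\<phi> g - \<phi> (u k)\<bar> < e} \<subseteq> U k" if k: "k < m" for k
  proof -
    have "{g \<in> L1_ball M. \<forall>\<phi>\<in>fst (p k). \<bar>\<phi> g - \<phi> (u k)\<bar> < e}
        \<subseteq> {g \<in> L1_ball M. \<forall>\<phi>\<in>fst (p k). \<bar>\<phi> g - \<phi> (u k)\<bar> < snd (p k)}"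
      using e_le[OF k] by (auto intro: less_le_trans)
    also have "\<dots> \<subseteq> U k"
      using p[OF k] by blast
    finally show ?thesis .
  qed
  obtain B where "B > 0" and B: "\<forall>\<phi>\<in>(\<Union>k<m. fst (p k)). \<forall>f\<in>L1 M. \<bar>\<phi> f\<bar> \<le> B * L1norm M f"
    using L1_dual_finite_bound[of "\<Union>k<m. fst (p k)" M] p by auto
  show ?thesis
    by (rule that[of "\<lambda>k. fst (p k)" e B]) (use p \<open>e > 0\<close> \<open>B > 0\<close> B nbhd in auto)
qed

lemma L1_weak_nbhd_mass:
  fixes x :: "'a \<Rightarrow> 'b::real_normed_vector" and m :: nat
  assumes "complete_measure M" and x: "x \<in> L1 M"
    and h: "\<And>k. k < m \<Longrightarrow> h k \<in> borel_measurable M"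
    and h_bounds: "\<And>k \<omega>. k < m \<Longrightarrow> 0 \<le> h k \<omega> \<and> h k \<omega> \<le> H k"
    and h_mass: "\<And>k. k < m \<Longrightarrow> (\<integral>\<omega>. h k \<omega> * norm (x \<omega>) \<partial>M) = 1" and "\<delta> > 0"
  obtains \<Theta> where "finite \<Theta>" and "\<Theta> \<subseteq> L1_dual M"
    and "\<And>k y. k < m \<Longrightarrow> y \<in> L1 M \<Longrightarrow> \<forall>\<theta>\<in>\<Theta>. \<bar>\<theta> y - \<theta> x\<bar> < \<delta> \<Longrightarrow>
      1 - 2 * \<delta> \<le> (\<integral>\<omega>. h k \<omega> * norm (y \<omega>) \<partial>M)"
proof -
  have "\<forall>k. \<exists>\<theta>. k < m \<longrightarrow> \<theta> \<in> L1_dual M \<and> 1 - \<delta> \<le> \<theta> x \<and>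
      (\<forall>y\<in>L1 M. \<theta> y \<le> (\<integral>\<omega>. h k \<omega> * norm (y \<omega>) \<partial>M))"
  proof
    fix k
    show "\<exists>\<theta>. k < m \<longrightarrow> \<theta> \<in> L1_dual M \<and> 1 - \<delta> \<le> \<theta> x \<and>
      (\<forall>y\<in>L1 M. \<theta> y \<le> (\<integral>\<omega>. h k \<omega> * norm (y \<omega>) \<partial>M))"
    proof (cases "k < m")
      case True
      obtain \<theta> where "\<theta> \<in> L1_dual M" "(\<integral>\<omega>. h k \<omega> * norm (x \<omega>) \<partial>M) - \<delta> \<le> \<theta> x"
        "\<And>y. y \<in> L1 M \<Longrightarrow> \<theta> y \<le> (\<integral>\<omega>. h k \<omega> * norm (y \<omega>) \<partial>M)"
        by (rule L1_weighted_norming_functional[OF assms(1) x h[OF True] _ \<open>\<delta> > 0\<close>])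
          (use h_bounds[OF True] in auto)
      then show ?thesis
        using h_mass[OF True] by auto
    qed simp
  qed
  from choice[OF this] obtain \<theta> where \<theta>: "\<And>k. k < m \<Longrightarrow> \<theta> k \<in> L1_dual M \<and> 1 - \<delta> \<le> \<theta> k x \<and>
      (\<forall>y\<in>L1 M. \<theta> k y \<le> (\<integral>\<omega>. h k \<omega> * norm (y \<omega>) \<partial>M))"
    by blast
  show ?thesis
  proof (rule that[of "\<theta> ` {..<m}"])
    show "finite (\<theta> ` {..<m})" and "\<theta> ` {..<m} \<subseteq> L1_dual M"
      using \<theta> by auto
    fix k y
    assume k: "k < m" and y: "y \<in> L1 M" and close: "\<forall>\<theta>'\<in>\<theta> ` {..<m}. \<bar>\<theta>' y - \<theta>' x\<bar> < \<delta>"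
    have "\<bar>\<theta> k y - \<theta> k x\<bar> < \<delta>"
      using close k by blast
    moreover have "1 - \<delta> \<le> \<theta> k x" and "\<theta> k y \<le> (\<integral>\<omega>. h k \<omega> * norm (y \<omega>) \<partial>M)"
      using \<theta>[OF k] y by auto
    ultimately show "1 - 2 * \<delta> \<le> (\<integral>\<omega>. h k \<omega> * norm (y \<omega>) \<partial>M)"
      by linarith
  qed
qed

lemma weakly_close_mem_convex_combination:
  fixes c :: "nat \<Rightarrow> real" and h :: "nat \<Rightarrow> 'a \<Rightarrow> real" and x y :: "'a \<Rightarrow> 'b::real_normed_vector"
  assumes "complete_measure M"
    and c: "\<And>k. k < m \<Longrightarrow> c k > 0" "(\<Sum>k<m. c k) = 1"
    and h: "\<And>k. k < m \<Longrightarrow> h k \<in> borel_measurable M"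
    and h_bounds: "\<And>k \<omega>. k < m \<Longrightarrow> 0 \<le> h k \<omega> \<and> h k \<omega> \<le> 1 / c k"
    and h_sum: "\<And>\<omega>. (\<Sum>k<m. c k * h k \<omega>) = 1"
    and x: "x \<in> L1 M" and u: "\<And>k. k < m \<Longrightarrow> u k \<in> L1 M"
    and u_eq: "\<And>k. k < m \<Longrightarrow> AE \<omega> in M. u k \<omega> = h k \<omega> *\<^sub>R x \<omega>"
    and \<Phi>: "\<And>k. k < m \<Longrightarrow> \<Phi> k \<subseteq> L1_dual M"
    and B: "\<And>k \<phi> f. k < m \<Longrightarrow> \<phi> \<in> \<Phi> k \<Longrightarrow> f \<in> L1 M \<Longrightarrow> \<bar>\<phi> f\<bar> \<le> B * L1norm M f" "0 \<le> B"
    and nbhd: "\<And>k. k < m \<Longrightarrow> {g \<in> L1_ball M. \<forall>\<phi>\<in>\<Phi> k. \<bar>\<phi> g - \<phi> (u k)\<bar> < e} \<subseteq> U k"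
    and y: "y \<in> L1_ball M" and t: "0 \<le> t" "t < 1" and cost: "\<And>k. k < m \<Longrightarrow> B * (t / c k) \<le> e / 2"
    and mass: "\<And>k. k < m \<Longrightarrow> 1 - t \<le> (\<integral>\<omega>. h k \<omega> * norm (y \<omega>) \<partial>M)"
    and close: "\<And>k \<phi>. k < m \<Longrightarrow> \<phi> \<in> \<Phi> k \<Longrightarrow>
      \<bar>\<phi> (\<lambda>\<omega>. h k \<omega> *\<^sub>R y \<omega>) - \<phi> (\<lambda>\<omega>. h k \<omega> *\<^sub>R x \<omega>)\<bar> < e / 2"
  shows "y \<in> {(\<lambda>\<omega>. \<Sum>k<m. c k *\<^sub>R v k \<omega>) | v. \<forall>k<m. v k \<in> U k}"
proof -
  have yL1: "y \<in> L1 M"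
    using y unfolding L1_ball_def by simp
  have h_abs: "\<bar>h k \<omega>\<bar> \<le> 1 / c k" if "k < m" for k \<omega>
    using h_bounds[OF that] by simp
  obtain g where g_meas: "\<And>k. k < m \<Longrightarrow> g k \<in> borel_measurable M"
    and g_abs: "\<And>k \<omega>. k < m \<Longrightarrow> \<bar>g k \<omega>\<bar> \<le> 2 / c k"
    and g_ball: "\<And>k. k < m \<Longrightarrow> (\<lambda>\<omega>. g k \<omega> *\<^sub>R y \<omega>) \<in> L1_ball M"
    and y_split: "y = (\<lambda>\<omega>. \<Sum>k<m. c k *\<^sub>R (g k \<omega> *\<^sub>R y \<omega>))"
    and g_close: "\<And>k. k < m \<Longrightarrow> (\<integral>\<omega>. \<bar>g k \<omega> - h k \<omega>\<bar> * norm (y \<omega>) \<partial>M) \<le> t / c k"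
    by (rule L1_ball_rebalance[where c=c and h=h and y=y and t=t])
      (use assms(1) c h h_bounds h_sum y t mass in auto)
  have "(\<lambda>\<omega>. g k \<omega> *\<^sub>R y \<omega>) \<in> U k" if k: "k < m" for k
  proof (rule nbhd[OF k, THEN subsetD], intro CollectI conjI ballI)
    show "(\<lambda>\<omega>. g k \<omega> *\<^sub>R y \<omega>) \<in> L1_ball M"
      by (rule g_ball[OF k])
    fix \<phi>
    assume "\<phi> \<in> \<Phi> k"
    then have \<phi>: "\<phi> \<in> L1_dual M" and \<phi>B: "\<forall>f\<in>L1 M. \<bar>\<phi> f\<bar> \<le> B * L1norm M f"
      using \<Phi>[OF k] B(1)[OF k] by auto
    have "\<bar>\<phi> (\<lambda>\<omega>. g k \<omega> *\<^sub>R y \<omega>) - \<phi> (\<lambda>\<omega>. h k \<omega> *\<^sub>R y \<omega>)\<bar>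
        \<le> B * (\<integral>\<omega>. \<bar>g k \<omega> - h k \<omega>\<bar> * norm (y \<omega>) \<partial>M)"
      using L1_dual_scaleR_diff_bound[OF assms(1) \<phi> \<phi>B yL1 g_meas[OF k] _ h[OF k] h_abs[OF k]]
        g_abs[OF k] by fastforce
    also have "\<dots> \<le> B * (t / c k)"
      using g_close[OF k] B(2) by (rule mult_left_mono)
    also have "\<dots> \<le> e / 2"
      by (rule cost[OF k])
    finally have "\<bar>\<phi> (\<lambda>\<omega>. g k \<omega> *\<^sub>R y \<omega>) - \<phi> (\<lambda>\<omega>. h k \<omega> *\<^sub>R y \<omega>)\<bar> \<le> e / 2" .
    moreover have "\<phi> (u k) = \<phi> (\<lambda>\<omega>. h k \<omega> *\<^sub>R x \<omega>)"
      using L1_scaleR[OF assms(1) x h[OF k] h_abs[OF k]] u_eq[OF k]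
      by (rule L1_dual_AE_cong[OF assms(1) \<phi> u[OF k]])
    ultimately show "\<bar>\<phi> (\<lambda>\<omega>. g k \<omega> *\<^sub>R y \<omega>) - \<phi> (u k)\<bar> < e"
      using close[OF k \<open>\<phi> \<in> \<Phi> k\<close>] by linarith
  qed
  then show ?thesis
    using y_split by (intro CollectI exI[of _ "\<lambda>k \<omega>. g k \<omega> *\<^sub>R y \<omega>"]) auto
qed

lemma rotund_L1_convex_combination_interior:
  fixes u :: "nat \<Rightarrow> 'a \<Rightarrow> 'b::real_normed_vector"
  assumes "complete_measure M" and rotund: "rotund TYPE('b)"
    and c: "\<And>k. k < m \<Longrightarrow> c k > 0" "(\<Sum>k<m. c k) = 1"
    and U: "\<And>k. k < m \<Longrightarrow> rel_weakly_open M (U k)" and u: "\<And>k. k < m \<Longrightarrow> u k \<in> U k"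
    and x: "x = (\<lambda>\<omega>. \<Sum>k<m. c k *\<^sub>R u k \<omega>)" and x1: "L1norm M x = 1"
  shows "\<exists>V. rel_weakly_open M V \<and> x \<in> V \<and> V \<subseteq> {(\<lambda>\<omega>. \<Sum>k<m. c k *\<^sub>R v k \<omega>) | v. \<forall>k<m. v k \<in> U k}"
proof -
  have uB: "u k \<in> L1_ball M" if "k < m" for k
    using U[OF that] u[OF that] unfolding rel_weakly_open_def by blast
  then have uL1: "u k \<in> L1 M" if "k < m" for k
    using that unfolding L1_ball_def by blast
  have xL1: "x \<in> L1 M"
    unfolding x by (rule L1_convex_combination[OF assms(1)], rule uL1)
  obtain h where h: "\<And>k. k < m \<Longrightarrow> h k \<in> borel_measurable M"
    and h_bounds: "\<And>k \<omega>. k < m \<Longrightarrow> 0 \<le> h k \<omega> \<and> h k \<omega> \<le> 1 / c k"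
    and h_sum: "\<And>\<omega>. (\<Sum>k<m. c k * h k \<omega>) = 1"
    and u_eq: "\<And>k. k < m \<Longrightarrow> AE \<omega> in M. u k \<omega> = h k \<omega> *\<^sub>R x \<omega>"
    and h_mass: "\<And>k. k < m \<Longrightarrow> (\<integral>\<omega>. h k \<omega> * norm (x \<omega>) \<partial>M) = 1"
    by (rule rotund_L1_convex_combination_decompose[where c=c and m=m and u=u and x=x,
          OF assms(1) rotund c uB x x1]) blast+
  obtain \<Phi> e B where \<Phi>: "\<And>k. k < m \<Longrightarrow> finite (\<Phi> k) \<and> \<Phi> k \<subseteq> L1_dual M" and "e > 0" and "B > 0"
    and B: "\<And>k \<phi> f. k < m \<Longrightarrow> \<phi> \<in> \<Phi> k \<Longrightarrow> f \<in> L1 M \<Longrightarrow> \<bar>\<phi> f\<bar> \<le> B * L1norm M f"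
    and nbhd: "\<And>k. k < m \<Longrightarrow> {g \<in> L1_ball M. \<forall>\<phi>\<in>\<Phi> k. \<bar>\<phi> g - \<phi> (u k)\<bar> < e} \<subseteq> U k"
    by (rule rel_weakly_open_family_nbhds[where m=m and U=U and u=u, OF U u]) blast+
  define cmin where "cmin = Min (insert 1 (c ` {..<m}))"
  have "cmin > 0"
    unfolding cmin_def using c(1) by (subst Min_gr_iff) auto
  have cmin_le: "cmin \<le> c k" if "k < m" for k
    unfolding cmin_def using that by (intro Min_le) auto
  define \<delta> where "\<delta> = min (1 / 4) (e * cmin / (4 * B))"
  have "\<delta> > 0" and "\<delta> \<le> 1 / 4"
    unfolding \<delta>_def using \<open>e > 0\<close> \<open>cmin > 0\<close> \<open>B > 0\<close> by auto
  have cost: "B * (2 * \<delta> / c k) \<le> e / 2" if "k < m" for k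
  proof -
    have "B * (2 * \<delta> / c k) \<le> B * (2 * (e * cmin / (4 * B)) / cmin)"
      unfolding \<delta>_def using cmin_le[OF that] \<open>cmin > 0\<close> \<open>B > 0\<close> \<open>e > 0\<close>
      by (intro mult_left_mono frac_le) auto
    also have "\<dots> = e / 2"
      using \<open>cmin > 0\<close> \<open>B > 0\<close> by (simp add: field_simps)
    finally show ?thesis .
  qed
  obtain \<Theta> where "finite \<Theta>" and "\<Theta> \<subseteq> L1_dual M"
    and mass: "\<And>k y. k < m \<Longrightarrow> y \<in> L1 M \<Longrightarrow> \<forall>\<theta>\<in>\<Theta>. \<bar>\<theta> y - \<theta> x\<bar> < \<delta> \<Longrightarrow>
      1 - 2 * \<delta> \<le> (\<integral>\<omega>. h k \<omega> * norm (y \<omega>) \<partial>M)"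
    by (rule L1_weak_nbhd_mass[where m=m and x=x and h=h and H="\<lambda>k. 1 / c k",
          OF assms(1) xL1 h h_bounds h_mass \<open>\<delta> > 0\<close>]) blast+
  \<comment> \<open>The functionals in \<open>\<Theta>\<close> keep \<open>\<integral>h k * norm y\<close> close to \<open>1\<close>; the functionals
    \<open>\<phi> (h k *\<^sub>R _)\<close> with \<open>\<phi> \<in> \<Phi> k\<close> keep \<open>h k *\<^sub>R y\<close> close to \<open>h k *\<^sub>R x\<close>, which is \<open>u k\<close> a.e.\<close>
  define \<Psi> where "\<Psi> = \<Theta> \<union> (\<Union>k<m. (\<lambda>\<phi> f. \<phi> (\<lambda>\<omega>. h k \<omega> *\<^sub>R f \<omega>)) ` \<Phi> k)"
  define r where "r = min \<delta> (e / 2)"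
  define V where "V = {g \<in> L1_ball M. \<forall>\<psi>\<in>\<Psi>. \<bar>\<psi> g - \<psi> x\<bar> < r}"
  have "r > 0"
    unfolding r_def using \<open>\<delta> > 0\<close> \<open>e > 0\<close> by simp
  have "rel_weakly_open M V"
    unfolding V_def
  proof (rule rel_weakly_open_basic)
    show "finite \<Psi>"
      unfolding \<Psi>_def using \<open>finite \<Theta>\<close> \<Phi> by auto
    have "(\<lambda>f. \<phi> (\<lambda>\<omega>. h k \<omega> *\<^sub>R f \<omega>)) \<in> L1_dual M" if "k < m" "\<phi> \<in> \<Phi> k" for k \<phi>
      using \<Phi>[OF that(1)] that(2) h[OF that(1)] h_bounds[OF that(1)]
      by (intro L1_dual_scaleR[OF assms(1), where H="1 / c k"]) auto
    then show "\<Psi> \<subseteq> L1_dual M"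
      unfolding \<Psi>_def using \<open>\<Theta> \<subseteq> L1_dual M\<close> by auto
  qed fact
  moreover have "x \<in> V"
    unfolding V_def L1_ball_def using xL1 x1 \<open>r > 0\<close> by simp
  moreover have "V \<subseteq> {(\<lambda>\<omega>. \<Sum>k<m. c k *\<^sub>R v k \<omega>) | v. \<forall>k<m. v k \<in> U k}"
  proof
    fix y
    assume "y \<in> V"
    then have y: "y \<in> L1_ball M" "y \<in> L1 M" and close: "\<And>\<psi>. \<psi> \<in> \<Psi> \<Longrightarrow> \<bar>\<psi> y - \<psi> x\<bar> < r"
      unfolding V_def L1_ball_def by auto
    show "y \<in> {(\<lambda>\<omega>. \<Sum>k<m. c k *\<^sub>R v k \<omega>) | v. \<forall>k<m. v k \<in> U k}"
    proof (rule weakly_close_mem_convex_combination[where c=c and h=h and m=m and x=x and u=u and \<Phi>=\<Phi>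
          and e=e and B=B and t="2 * \<delta>"])
      show "1 - 2 * \<delta> \<le> (\<integral>\<omega>. h k \<omega> * norm (y \<omega>) \<partial>M)" if "k < m" for k
        using close y(2) that unfolding \<Psi>_def r_def by (intro mass) auto
      show "\<bar>\<phi> (\<lambda>\<omega>. h k \<omega> *\<^sub>R y \<omega>) - \<phi> (\<lambda>\<omega>. h k \<omega> *\<^sub>R x \<omega>)\<bar> < e / 2" if "k < m" "\<phi> \<in> \<Phi> k" for k \<phi>
        using close[of "\<lambda>f. \<phi> (\<lambda>\<omega>. h k \<omega> *\<^sub>R f \<omega>)"] that unfolding \<Psi>_def r_def by auto
    qed (use assms(1) c h h_bounds h_sum xL1 uL1 u_eq \<Phi> B \<open>B > 0\<close> nbhd y(1) \<open>\<delta> > 0\<close>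
        \<open>\<delta> \<le> 1 / 4\<close> cost in auto)
  qed
  ultimately show ?thesis
    by blast
qed

lemma rotund_imp_L1_CWO_S:
  assumes "complete_measure M" and "rotund TYPE('b::real_normed_vector)"
  shows "L1_CWO_S M TYPE('b)"
  unfolding L1_CWO_S_def Let_def
proof (intro allI impI ballI)
  fix m :: nat and c :: "nat \<Rightarrow> real" and U :: "nat \<Rightarrow> ('a \<Rightarrow> 'b) set" and x
  assume H: "1 \<le> m \<and> (\<forall>k<m. 0 < c k) \<and> (\<Sum>k<m. c k) = 1 \<and> (\<forall>k<m. rel_weakly_open M (U k))"
    and "x \<in> {(\<lambda>\<omega>. \<Sum>k<m. c k *\<^sub>R u k \<omega>) | u. \<forall>k<m. u k \<in> U k}" and "L1norm M x = 1"
  then obtain u where "\<forall>k<m. u k \<in> U k" and "x = (\<lambda>\<omega>. \<Sum>k<m. c k *\<^sub>R u k \<omega>)"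
    by blast
  then show "\<exists>V. rel_weakly_open M V \<and> x \<in> V \<and> V \<subseteq> {(\<lambda>\<omega>. \<Sum>k<m. c k *\<^sub>R u k \<omega>) | u. \<forall>k<m. u k \<in> U k}"
    using H \<open>L1norm M x = 1\<close> by (intro rotund_L1_convex_combination_interior[OF assms]) auto
qed

theorem theorem1p1:
  fixes M :: "'a measure"
  assumes "sigma_finite_measure M"
    and "complete_measure M"
    and "emeasure M (space M) \<noteq> 0"
    and "wUR TYPE('b::banach)"
  shows "L1_CWO_S M TYPE('b)"
  using rotund_imp_L1_CWO_S[OF assms(2) wUR_imp_rotund[OF assms(4)]] .

end
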